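(* Let $\mathcal X\subseteq\mathbb R^p$ and $\mathcal A=\{a^{(1)},\dots,a^{(d)}\}$ a finite set of real actions. Let $(\boldsymbol X_i,A_i,R_i)$, $i=1,\dots,n$, be random tuples such that: (i) the tuples are independent; (ii) $\boldsymbol X_1,\dots,\boldsymbol X_n$ are i.i.d.; (iii) conditionally on $\boldsymbol X_i$, $A_i$ has distribution $\widetilde\pi_i(\cdot\mid\boldsymbol X_i)$ with $\widetilde\pi_i(a\mid\boldsymbol x)>0$ for all $a,\boldsymbol x$; (iv) the conditional distribution of $R_i$ given $\boldsymbol X_i=\boldsymbol x,A_i=a$ does not depend on $i$; rewards have finite second moments. Let $\varrho(\boldsymbol x,a)=\mathbb E[R_i\mid\boldsymbol X_i=\boldsymbol x,A_i=a]$. Let $f_1,\dots,f_q:\mathbb R\to\mathbb R$, $\boldsymbol f(a)=(1,f_1(a),\dots,f_q(a))^\top$, and let $D\in\mathbb R^{d\times(q+1)}$ have $k$-th row $\boldsymbol f(a^{(k)})^\top$, assumed of full column rank. Assume the regression assumption: for every $\boldsymbol x$ there is $\boldsymbol\beta(\boldsymbol x)\in\mathbb R^{q+1}$ with $\varrho(\boldsymbol x,a)=\boldsymbol f(a)^\top\boldsymbol\beta(\boldsymbol x)$ for all $a\in\mathcal A$. Let $\Sigma_i(\boldsymbol X_i)$ be the conditional covariance matrix given $\boldsymbol X_i$ of the per-action IPS weights, with entries $\Sigma_{i,jk}(\boldsymbol X_i)=\operatorname{Cov}\big(R_i\mathbf 1_{\{A_i=a^{(j)}\}}/\widetilde\pi_i(a^{(j)}\mid\boldsymbol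 X_i),\,R_i\mathbf 1_{\{A_i=a^{(k)}\}}/\widetilde\pi_i(a^{(k)}\mid\boldsymbol X_i)\mid\boldsymbol X_i\big)$, assumed invertible, and take weight matrices $W_i(\boldsymbol X_i)=\Sigma_i(\boldsymbol X_i)^{-1}$ and kernel matrices $\mathbf K_i(\boldsymbol X_i)=W_i(\boldsymbol X_i)D\,(D^\top W_i(\boldsymbol X_i)D)^{-1}D^\top$. For a deterministic policy $\pi:\mathcal X\to\mathcal A$ define $$\widehat V_{\rm IPS}(\pi)=\frac1n\sum_{i=1}^nR_i\frac{\mathbf 1_{\{A_i=\pi(\boldsymbol X_i)\}}}{\widetilde\pi_i(A_i\mid\boldsymbol X_i)},\qquad \widehat V_{\rm K}(\pi)=\frac1n\sum_{i=1}^nR_i\frac{\langle\boldsymbol e_{A_i},\mathbf K_i(\boldsymbol X_i)\boldsymbol e_{\pi(\boldsymbol X_i)}\rangle}{\widetilde\pi_i(A_i\mid\boldsymbol X_i)}.$$ Then for every deterministic policy $\pi:\mathcal X\to\mathcal A$, $\operatorname{Var}(\widehat V_{\rm K}(\pi))\le\operatorname{Var}(\widehat V_{\rm IPS}(\pi))$.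
   Context: $\boldsymbol e_a\in\{0,1\}^d$ is the one-hot encoding of $a\in\mathcal A$ (entry $k$ equals $\mathbf 1_{\{a=a^{(k)}\}}$). Variances and covariances are taken under the data-generating law described (actions drawn from the logging policies $\widetilde\pi_i$). *)

theory Defs
  imports "HOL-Analysis.Analysis" "HOL-Probability.Probability"
begin

definition design :: "('d::finite \<Rightarrow> real) \<Rightarrow> (real \<Rightarrow> real^'m) \<Rightarrow> real^'m^'d" where
  "design act fv = (\<chi> k. fv (act k))"

definition ips_weight ::
  "(nat \<Rightarrow> 'd \<Rightarrow> 'x \<Rightarrow> real) \<Rightarrow> (nat \<Rightarrow> 'w \<Rightarrow> 'x) \<Rightarrow> (nat \<Rightarrow> 'w \<Rightarrow> 'd)
    \<Rightarrow> (nat \<Rightarrow> 'w \<Rightarrow> real) \<Rightarrow> nat \<Rightarrow> 'd \<Rightarrow> 'w \<Rightarrow> real" where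
  "ips_weight pit X A R i j \<omega> =
     R i \<omega> * (if A i \<omega> = j then 1 else 0) / pit i j (X i \<omega>)"

definition cond_cov_matrix ::
  "'w measure \<Rightarrow> 'x measure \<Rightarrow> (nat \<Rightarrow> 'd::finite \<Rightarrow> 'x \<Rightarrow> real) \<Rightarrow> (nat \<Rightarrow> 'w \<Rightarrow> 'x)
    \<Rightarrow> (nat \<Rightarrow> 'w \<Rightarrow> 'd) \<Rightarrow> (nat \<Rightarrow> 'w \<Rightarrow> real) \<Rightarrow> nat \<Rightarrow> 'w \<Rightarrow> real^'d^'d" where
  "cond_cov_matrix M Mx pit X A R i \<omega> =
     (let F = vimage_algebra (space M) (X i) Mx;
          Y = ips_weight pit X A R i
      in \<chi> j k. real_cond_exp M F (\<lambda>\<eta>. Y j \<eta> * Y k \<eta>) \<omega>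
                 - real_cond_exp M F (Y j) \<omega> * real_cond_exp M F (Y k) \<omega>)"

definition kernel_matrix :: "real^'d^'d \<Rightarrow> real^'m^'d \<Rightarrow> real^'d^'d" where
  "kernel_matrix Sig D =
     (let W = matrix_inv Sig
      in W ** D ** matrix_inv (transpose D ** W ** D) ** transpose D)"

definition V_IPS ::
  "nat \<Rightarrow> (nat \<Rightarrow> 'd \<Rightarrow> 'x \<Rightarrow> real) \<Rightarrow> (nat \<Rightarrow> 'w \<Rightarrow> 'x) \<Rightarrow> (nat \<Rightarrow> 'w \<Rightarrow> 'd)
    \<Rightarrow> (nat \<Rightarrow> 'w \<Rightarrow> real) \<Rightarrow> ('x \<Rightarrow> 'd) \<Rightarrow> 'w \<Rightarrow> real" where
  "V_IPS n pit X A R pol \<omega> =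
     (1 / real n) * (\<Sum>i = 1..n. R i \<omega> * (if A i \<omega> = pol (X i \<omega>) then 1 else 0)
                                   / pit i (A i \<omega>) (X i \<omega>))"

definition V_K ::
  "'w measure \<Rightarrow> 'x measure \<Rightarrow> nat \<Rightarrow> (nat \<Rightarrow> 'd::finite \<Rightarrow> 'x \<Rightarrow> real) \<Rightarrow> (nat \<Rightarrow> 'w \<Rightarrow> 'x)
    \<Rightarrow> (nat \<Rightarrow> 'w \<Rightarrow> 'd) \<Rightarrow> (nat \<Rightarrow> 'w \<Rightarrow> real) \<Rightarrow> real^'m^'d \<Rightarrow> ('x \<Rightarrow> 'd) \<Rightarrow> 'w \<Rightarrow> real" where
  "V_K M Mx n pit X A R D pol \<omega> =
     (1 / real n) * (\<Sum>i = 1..n. R i \<omega> *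
        (axis (A i \<omega>) (1::real) \<bullet>
           (kernel_matrix (cond_cov_matrix M Mx pit X A R i \<omega>) D *v axis (pol (X i \<omega>)) 1))
        / pit i (A i \<omega>) (X i \<omega>))"

end

theory Submission
  imports Defs
begin

(* Only the logged action has a nonzero IPS weight, so given X_i the covariance of the weight
   vector Y = (R 1{A = a} / pi(a|X))_a is diag(s) - rho rho^T, where rho(a) is the mean reward
   and s(a) = E[R^2 | X, a] / pi(a|X).  Both estimators average independent terms c(X_i)^T Y_i with
   coefficients depending on X_i only: c = e_pi(X) for IPS and c = K e_pi(X) for the kernel
   estimator, and such a term has mean E[c^T rho] and second moment E[c^T Sigma c + (c^T rho)^2].
   By the regression assumption rho lies in the column space of D, and K e is the generalised
   least squares weight: D^T K e = D^T e gives (K e)^T rho = rho(pi(X)), and the Gauss-Markov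
   argument gives (K e)^T Sigma (K e) <= e^T Sigma e.  So every kernel term has the mean of the
   corresponding IPS term and a smaller second moment, and the variances add up over the
   independent rounds. *)

section \<open>Generalised least squares weights\<close>

definition pos_semidef :: "real^'n^'n \<Rightarrow> bool" where
  "pos_semidef S \<longleftrightarrow> transpose S = S \<and> (\<forall>v. 0 \<le> v \<bullet> (S *v v))"

lemma matrix_inv_cancel:
  fixes S :: "real^'n^'n"
  assumes "invertible S"
  shows "S ** matrix_inv S = mat 1" "matrix_inv S ** S = mat 1"
proof -
  have "\<exists>S'. S ** S' = mat 1 \<and> S' ** S = mat 1"
    using assms unfolding invertible_def by blast
  then show "S ** matrix_inv S = mat 1" "matrix_inv S ** S = mat 1"
    unfolding matrix_inv_def by (metis (mono_tags, lifting) someI_ex)+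
qed

lemma matrix_inv_cancel_vector:
  fixes S :: "real^'n^'n"
  assumes "invertible S"
  shows "S *v (matrix_inv S *v u) = u" "matrix_inv S *v (S *v u) = u"
  using matrix_vector_mul_assoc[of S "matrix_inv S" u] matrix_vector_mul_assoc[of "matrix_inv S" S u]
  by (simp_all add: matrix_inv_cancel[OF assms])

lemma inner_matrix_vector_transpose:
  "(x::real^'n) \<bullet> ((A::real^'m^'n) *v y) = (transpose A *v x) \<bullet> y"
  by (simp add: transpose_matrix_vector dot_lmul_matrix)

lemma inner_symmetric_matrix_vector:
  "transpose (S::real^'n^'n) = S \<Longrightarrow> x \<bullet> (S *v y) = y \<bullet> (S *v x)"
  by (metis inner_matrix_vector_transpose inner_commute)

lemma quadratic_nonneg_imp_square_le:
  fixes a b c :: real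
  assumes "\<And>t. 0 \<le> a + 2 * t * b + t\<^sup>2 * c" and "0 \<le> c"
  shows "b\<^sup>2 \<le> a * c"
proof (cases "c = 0")
  case True
  have "b = 0"
    using assms(1)[of "- (a + 1) / (2 * b)"] True by (cases "b = 0") (auto simp: field_simps)
  then show ?thesis using assms(1)[of 0] True by simp
next
  case False
  have "0 \<le> a + 2 * (- b / c) * b + (- b / c)\<^sup>2 * c" by (rule assms)
  then show ?thesis using False assms(2) by (simp add: field_simps power2_eq_square)
qed

lemma pos_semidef_Cauchy_Schwarz:
  assumes "pos_semidef S"
  shows "(x \<bullet> (S *v y))\<^sup>2 \<le> (x \<bullet> (S *v x)) * (y \<bullet> (S *v y))"
proof (rule quadratic_nonneg_imp_square_le)
  have sym: "y \<bullet> (S *v x) = x \<bullet> (S *v y)"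
    using assms by (simp add: pos_semidef_def inner_symmetric_matrix_vector)
  fix t
  have "0 \<le> (x + t *\<^sub>R y) \<bullet> (S *v (x + t *\<^sub>R y))"
    using assms by (simp add: pos_semidef_def)
  also have "\<dots> = x \<bullet> (S *v x) + 2 * t * (x \<bullet> (S *v y)) + t\<^sup>2 * (y \<bullet> (S *v y))"
    using sym by (simp add: matrix_vector_right_distrib inner_add_left inner_add_right
        matrix_vector_mult_scaleR power2_eq_square algebra_simps)
  finally show "0 \<le> x \<bullet> (S *v x) + 2 * t * (x \<bullet> (S *v y)) + t\<^sup>2 * (y \<bullet> (S *v y))" .
  show "0 \<le> y \<bullet> (S *v y)"
    using assms by (simp add: pos_semidef_def)
qed

lemma pos_semidef_quadratic_form_eq_0:
  assumes "pos_semidef S" and "w \<bullet> (S *v w) = 0"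
  shows "S *v w = 0"
proof -
  have "((S *v w) \<bullet> (S *v w))\<^sup>2 \<le> ((S *v w) \<bullet> (S *v (S *v w))) * (w \<bullet> (S *v w))"
    by (rule pos_semidef_Cauchy_Schwarz[OF assms(1)])
  then show ?thesis using assms(2) by simp
qed

lemma inner_gram_matrix:
  fixes D :: "real^'m^'d" and W :: "real^'d^'d"
  shows "y \<bullet> ((transpose D ** W ** D) *v x) = (D *v y) \<bullet> (W *v (D *v x))"
proof -
  have "(transpose D ** W ** D) *v x = transpose D *v (W *v (D *v x))"
    by (simp add: matrix_vector_mul_assoc matrix_mul_assoc)
  then show ?thesis by (simp only: inner_matrix_vector_transpose transpose_transpose)
qed

lemma invertible_gram_matrix:
  fixes S :: "real^'d^'d" and D :: "real^'m^'d"
  assumes S: "pos_semidef S" "invertible S" and rank: "rank D = CARD('m)"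
  shows "invertible (transpose D ** matrix_inv S ** D)"
  unfolding invertible_left_inverse matrix_left_invertible_ker
proof (intro allI impI)
  fix y
  assume "(transpose D ** matrix_inv S ** D) *v y = 0"
  then have "(D *v y) \<bullet> (matrix_inv S *v (D *v y)) = 0"
    by (metis inner_gram_matrix inner_zero_right)
  moreover define w where "w = matrix_inv S *v (D *v y)"
  moreover have Sw: "S *v w = D *v y"
    unfolding w_def by (rule matrix_inv_cancel_vector(1)[OF S(2)])
  ultimately have "w \<bullet> (S *v w) = 0"
    by (simp add: inner_commute)
  then have "D *v y = 0"
    using pos_semidef_quadratic_form_eq_0[OF S(1), of w] Sw by simp
  then show "y = 0"
    using rank full_rank_injective matrix_left_invertible_injective matrix_left_invertible_ker by blast
qed

lemma transpose_mul_kernel_matrix: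
  fixes S :: "real^'d^'d" and D :: "real^'m^'d"
  assumes "invertible (transpose D ** matrix_inv S ** D)"
  shows "transpose D ** kernel_matrix S D = transpose D"
  using matrix_inv_cancel(1)[OF assms] by (simp add: kernel_matrix_def Let_def matrix_mul_assoc)

lemma mul_kernel_matrix:
  fixes S :: "real^'d^'d" and D :: "real^'m^'d"
  assumes "invertible S"
  shows "S ** kernel_matrix S D = D ** matrix_inv (transpose D ** matrix_inv S ** D) ** transpose D"
  using matrix_inv_cancel(1)[OF assms] by (simp add: kernel_matrix_def Let_def matrix_mul_assoc)

lemma kernel_matrix_unbiased:
  fixes S :: "real^'d^'d" and D :: "real^'m^'d"
  assumes "invertible (transpose D ** matrix_inv S ** D)"
  shows "(kernel_matrix S D *v v) \<bullet> (D *v \<beta>) = v \<bullet> (D *v \<beta>)"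
proof -
  have "(kernel_matrix S D *v v) \<bullet> (D *v \<beta>) = (transpose D *v (kernel_matrix S D *v v)) \<bullet> \<beta>"
    by (rule inner_matrix_vector_transpose)
  also have "\<dots> = (transpose D *v v) \<bullet> \<beta>"
    by (simp add: matrix_vector_mul_assoc transpose_mul_kernel_matrix[OF assms])
  finally show ?thesis by (simp add: inner_matrix_vector_transpose)
qed

(* Gauss-Markov: c = K v satisfies D^T c = D^T v and S c lies in the column space of D, so
   c^T S c = v^T S c, and Cauchy-Schwarz for the semi-inner product of S bounds this. *)
lemma kernel_matrix_quadratic_form_le:
  fixes S :: "real^'d^'d" and D :: "real^'m^'d"
  assumes S: "pos_semidef S" "invertible S" and G: "invertible (transpose D ** matrix_inv S ** D)"
  shows "(kernel_matrix S D *v v) \<bullet> (S *v (kernel_matrix S D *v v)) \<le> v \<bullet> (S *v v)"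
proof -
  define c where "c = kernel_matrix S D *v v"
  define z where "z = (matrix_inv (transpose D ** matrix_inv S ** D) ** transpose D) *v v"
  have "S *v c = D *v z"
    unfolding c_def z_def by (simp add: matrix_vector_mul_assoc mul_kernel_matrix[OF S(2)] matrix_mul_assoc)
  then have cSc: "c \<bullet> (S *v c) = v \<bullet> (S *v c)"
    using kernel_matrix_unbiased[OF G, of v z] by (simp add: c_def)
  have "(v \<bullet> (S *v c))\<^sup>2 \<le> (v \<bullet> (S *v v)) * (c \<bullet> (S *v c))"
    by (rule pos_semidef_Cauchy_Schwarz[OF S(1)])
  moreover have "0 \<le> c \<bullet> (S *v c)" "0 \<le> v \<bullet> (S *v v)"
    using S(1) by (simp_all add: pos_semidef_def)
  ultimately show ?thesis
    unfolding c_def[symmetric] cSc[symmetric]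
    by (cases "c \<bullet> (S *v c) = 0") (auto simp: power2_eq_square)
qed

definition diag_minus_outer :: "real^'n \<Rightarrow> real^'n \<Rightarrow> real^'n^'n" where
  "diag_minus_outer s \<rho> = (\<chi> j k. (if j = k then s $ j else 0) - \<rho> $ j * \<rho> $ k)"

lemma diag_minus_outer_mult_vector:
  "diag_minus_outer s \<rho> *v v = (\<chi> j. s $ j * v $ j) - (\<rho> \<bullet> v) *\<^sub>R \<rho>"
proof -
  have "(\<Sum>k\<in>UNIV. ((if j = k then s $ j else 0) - \<rho> $ j * \<rho> $ k) * v $ k)
      = s $ j * v $ j - (\<Sum>k\<in>UNIV. \<rho> $ k * v $ k) * \<rho> $ j" for j
    by (simp add: left_diff_distrib sum_subtractf if_distrib[of "\<lambda>x. x * _"] sum_distrib_right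
        cong: if_cong) (simp add: mult_ac)
  then show ?thesis
    by (simp add: vec_eq_iff diag_minus_outer_def matrix_vector_mult_def inner_vec_def)
qed

lemma quadratic_form_diag_minus_outer:
  "v \<bullet> (diag_minus_outer s \<rho> *v v) = (\<Sum>j\<in>UNIV. (v $ j)\<^sup>2 * s $ j) - (v \<bullet> \<rho>)\<^sup>2"
proof -
  have "v \<bullet> (\<chi> j. s $ j * v $ j) = (\<Sum>j\<in>UNIV. (v $ j)\<^sup>2 * s $ j)"
    by (simp add: inner_vec_def power2_eq_square mult_ac)
  then show ?thesis
    by (simp add: diag_minus_outer_mult_vector inner_diff_right inner_commute[of \<rho>] power2_eq_square)
qed

lemma square_weighted_mean_le:
  fixes p a :: "'d::finite \<Rightarrow> real"
  assumes "\<And>j. 0 \<le> p j" and "(\<Sum>j\<in>UNIV. p j) = 1"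
  shows "(\<Sum>j\<in>UNIV. p j * a j)\<^sup>2 \<le> (\<Sum>j\<in>UNIV. p j * (a j)\<^sup>2)"
proof -
  define m where "m = (\<Sum>j\<in>UNIV. p j * a j)"
  have "0 \<le> (\<Sum>j\<in>UNIV. p j * (a j - m)\<^sup>2)"
    using assms(1) by (simp add: sum_nonneg)
  also have "\<dots> = (\<Sum>j\<in>UNIV. p j * (a j)\<^sup>2) - 2 * m * m + m\<^sup>2 * (\<Sum>j\<in>UNIV. p j)"
    by (simp add: m_def power2_diff algebra_simps sum.distrib sum_subtractf sum_distrib_left sum_distrib_right)
  finally show ?thesis
    using assms(2) by (simp add: m_def power2_eq_square)
qed

lemma pos_semidef_diag_minus_outer:
  fixes s \<rho> :: "real^'d" and p :: "'d \<Rightarrow> real"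
  assumes p: "\<And>j. 0 < p j" "(\<Sum>j\<in>UNIV. p j) = 1"
    and dominated: "\<And>j. (\<rho> $ j)\<^sup>2 \<le> p j * s $ j"
  shows "pos_semidef (diag_minus_outer s \<rho>)"
  unfolding pos_semidef_def quadratic_form_diag_minus_outer
proof (intro conjI allI)
  show "transpose (diag_minus_outer s \<rho>) = diag_minus_outer s \<rho>"
    by (simp add: diag_minus_outer_def transpose_def vec_eq_iff mult.commute)
  fix v :: "real^'d"
  define a where "a j = v $ j * \<rho> $ j / p j" for j
  have "(v \<bullet> \<rho>)\<^sup>2 = (\<Sum>j\<in>UNIV. p j * a j)\<^sup>2"
    using p(1) by (simp add: a_def inner_vec_def less_imp_neq[symmetric])
  also have "\<dots> \<le> (\<Sum>j\<in>UNIV. p j * (a j)\<^sup>2)"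
    using p by (intro square_weighted_mean_le) (auto intro: less_imp_le)
  also have "\<dots> \<le> (\<Sum>j\<in>UNIV. (v $ j)\<^sup>2 * s $ j)"
  proof (rule sum_mono)
    fix j
    have "p j * (a j)\<^sup>2 = (v $ j)\<^sup>2 * (\<rho> $ j)\<^sup>2 / p j"
      using p(1)[of j] by (simp add: a_def power2_eq_square field_simps)
    also have "\<dots> \<le> (v $ j)\<^sup>2 * (p j * s $ j) / p j"
      using dominated[of j] p(1)[of j] by (intro divide_right_mono mult_left_mono) auto
    also have "\<dots> = (v $ j)\<^sup>2 * s $ j"
      using p(1)[of j] by simp
    finally show "p j * (a j)\<^sup>2 \<le> (v $ j)\<^sup>2 * s $ j" .
  qed
  finally show "0 \<le> (\<Sum>j\<in>UNIV. (v $ j)\<^sup>2 * s $ j) - (v \<bullet> \<rho>)\<^sup>2"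
    by simp
qed

lemma kernel_weights_unbiased_second_moment_le:
  fixes s \<rho> :: "real^'d" and p :: "'d \<Rightarrow> real" and D :: "real^'m^'d" and q :: 'd
  assumes p: "\<And>j. 0 < p j" "(\<Sum>j\<in>UNIV. p j) = 1"
    and dominated: "\<And>j. (\<rho> $ j)\<^sup>2 \<le> p j * s $ j"
    and invertible: "invertible (diag_minus_outer s \<rho>)"
    and regression: "\<rho> = D *v \<beta>" and rank: "rank D = CARD('m)"
  defines "c \<equiv> kernel_matrix (diag_minus_outer s \<rho>) D *v axis q 1"
  shows "c \<bullet> \<rho> = \<rho> $ q" and "(\<Sum>j\<in>UNIV. (c $ j)\<^sup>2 * s $ j) \<le> s $ q"
proof -
  let ?S = "diag_minus_outer s \<rho>"
  have psd: "pos_semidef ?S"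
    by (rule pos_semidef_diag_minus_outer[OF p dominated])
  note G = invertible_gram_matrix[OF psd invertible rank]
  show unbiased: "c \<bullet> \<rho> = \<rho> $ q"
    using kernel_matrix_unbiased[OF G, of "axis q 1" \<beta>]
    by (simp add: c_def regression inner_axis')
  have "c \<bullet> (?S *v c) \<le> axis q 1 \<bullet> (?S *v axis q 1)"
    unfolding c_def by (rule kernel_matrix_quadratic_form_le[OF psd invertible G])
  moreover have "(\<Sum>j\<in>UNIV. (axis q 1 $ j)\<^sup>2 * s $ j) = s $ q"
    by (simp add: axis_def if_distrib[of "\<lambda>x. x\<^sup>2 * _"] cong: if_cong)
  ultimately show "(\<Sum>j\<in>UNIV. (c $ j)\<^sup>2 * s $ j) \<le> s $ q"
    using unbiased by (simp add: quadratic_form_diag_minus_outer inner_axis' inner_commute[of c])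
qed

section \<open>Measurability of matrix-valued maps\<close>

definition matrix_measurable :: "'w measure \<Rightarrow> ('w \<Rightarrow> real^'n^'m) \<Rightarrow> bool" where
  "matrix_measurable N \<Phi> \<longleftrightarrow> (\<forall>i j. (\<lambda>\<omega>. \<Phi> \<omega> $ i $ j) \<in> borel_measurable N)"

lemma matrix_measurableD:
  "matrix_measurable N \<Phi> \<Longrightarrow> (\<lambda>\<omega>. \<Phi> \<omega> $ i $ j) \<in> borel_measurable N"
  unfolding matrix_measurable_def by blast

lemma matrix_measurable_const: "matrix_measurable N (\<lambda>_. C)"
  unfolding matrix_measurable_def by simp

lemma matrix_measurable_mult:
  "matrix_measurable N \<Phi> \<Longrightarrow> matrix_measurable N \<Psi> \<Longrightarrow> matrix_measurable N (\<lambda>\<omega>. \<Phi> \<omega> ** \<Psi> \<omega>)"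
  unfolding matrix_measurable_def matrix_matrix_mult_def
  by (auto intro!: borel_measurable_sum borel_measurable_times)

lemma matrix_measurable_transpose:
  "matrix_measurable N \<Phi> \<Longrightarrow> matrix_measurable N (\<lambda>\<omega>. transpose (\<Phi> \<omega>))"
  unfolding matrix_measurable_def transpose_def by simp

lemma matrix_measurable_det:
  "matrix_measurable N \<Phi> \<Longrightarrow> (\<lambda>\<omega>. det (\<Phi> \<omega>)) \<in> borel_measurable N"
  unfolding det_def
  by (auto dest: matrix_measurableD intro!: borel_measurable_sum borel_measurable_times borel_measurable_prod)

lemma matrix_inv_Cramer:
  fixes S :: "real^'n^'n"
  assumes "det S \<noteq> 0"
  shows "matrix_inv S $ i $ j = det (\<chi> r s. if s = i then axis j 1 $ r else S $ r $ s) / det S"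
proof -
  have "S *v (matrix_inv S *v axis j 1) = axis j 1"
    using assms by (simp add: matrix_inv_cancel_vector invertible_det_nz)
  then have "matrix_inv S *v axis j 1 = (\<chi> k. det (\<chi> r s. if s = k then axis j 1 $ r else S $ r $ s) / det S)"
    using cramer[OF assms] by blast
  then show ?thesis
    by (simp add: vec_eq_iff matrix_vector_mult_basis column_def)
qed

lemma matrix_inv_not_invertible:
  fixes S :: "real^'n^'n"
  assumes "\<not> invertible S"
  shows "matrix_inv S = (SOME S' :: real^'n^'n. False)"
  using assms unfolding matrix_inv_def invertible_def by meson

lemma matrix_measurable_matrix_inv:
  fixes \<Phi> :: "'w \<Rightarrow> real^'n^'n"
  assumes "matrix_measurable N \<Phi>"
  shows "matrix_measurable N (\<lambda>\<omega>. matrix_inv (\<Phi> \<omega>))"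
  unfolding matrix_measurable_def
proof (intro allI)
  fix i j
  let ?C = "\<lambda>\<omega>. (\<chi> r s. if s = i then axis j 1 $ r else \<Phi> \<omega> $ r $ s) :: real^'n^'n"
  have "matrix_measurable N ?C"
    unfolding matrix_measurable_def
  proof (intro allI)
    fix r s
    show "(\<lambda>\<omega>. ?C \<omega> $ r $ s) \<in> borel_measurable N"
      using matrix_measurableD[OF assms] by (cases "s = i") simp_all
  qed
  then have [measurable]: "(\<lambda>\<omega>. det (?C \<omega>)) \<in> borel_measurable N" "(\<lambda>\<omega>. det (\<Phi> \<omega>)) \<in> borel_measurable N"
    using assms by (simp_all add: matrix_measurable_det)
  \<comment> \<open>Off the invertible matrices, \<open>matrix_inv\<close> is one fixed junk matrix.\<close>
  have "matrix_inv (\<Phi> \<omega>) $ i $ j = (if det (\<Phi> \<omega>) \<noteq> 0 then det (?C \<omega>) / det (\<Phi> \<omega>)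
      else (SOME S' :: real^'n^'n. False) $ i $ j)" for \<omega>
    by (simp add: matrix_inv_Cramer matrix_inv_not_invertible invertible_det_nz)
  then show "(\<lambda>\<omega>. matrix_inv (\<Phi> \<omega>) $ i $ j) \<in> borel_measurable N"
    by simp
qed

lemma matrix_measurable_kernel_matrix:
  "matrix_measurable N \<Phi> \<Longrightarrow> matrix_measurable N (\<lambda>\<omega>. kernel_matrix (\<Phi> \<omega>) D)"
  unfolding kernel_matrix_def Let_def
  by (intro matrix_measurable_mult matrix_measurable_matrix_inv matrix_measurable_transpose
      matrix_measurable_const)

section \<open>One round of logged data\<close>

lemma (in prob_space) square_expectation_le:
  fixes f :: "'a \<Rightarrow> real"
  assumes "f \<in> borel_measurable M" and "integrable M (\<lambda>x. (f x)\<^sup>2)"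
  shows "(expectation f)\<^sup>2 \<le> expectation (\<lambda>x. (f x)\<^sup>2)"
  using variance_positive[of f] variance_eq[OF square_integrable_imp_integrable[OF assms] assms(2)]
  by simp

(* The action is drawn from p (. | X); kap x k is the conditional law of the reward given the
   context x and the action k. *)
locale logged_round =
  fixes M :: "'w measure" and X :: "'w \<Rightarrow> 'x::topological_space" and A :: "'w \<Rightarrow> 'd::finite"
    and R :: "'w \<Rightarrow> real" and p :: "'d \<Rightarrow> 'x \<Rightarrow> real" and kap :: "'x \<Rightarrow> 'd \<Rightarrow> real measure"
  assumes M_prob: "prob_space M"
    and X_meas [measurable]: "X \<in> M \<rightarrow>\<^sub>M borel"
    and A_meas [measurable]: "A \<in> M \<rightarrow>\<^sub>M count_space UNIV"
    and R_meas [measurable]: "R \<in> M \<rightarrow>\<^sub>M borel"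
    and p_meas [measurable]: "\<And>k. p k \<in> borel_measurable borel"
    and p_pos: "\<And>k x. p k x > 0"
    and p_sum: "\<And>x. (\<Sum>k\<in>UNIV. p k x) = 1"
    and A_cond: "\<And>k B. B \<in> sets borel \<Longrightarrow>
                   measure M {\<omega> \<in> space M. X \<omega> \<in> B \<and> A \<omega> = k}
                   = (\<integral>\<omega>. indicator B (X \<omega>) * p k (X \<omega>) \<partial>M)"
    and kap_meas: "\<And>k. (\<lambda>x. kap x k) \<in> borel \<rightarrow>\<^sub>M prob_algebra borel"
    and R_cond: "\<And>k B C. B \<in> sets borel \<Longrightarrow> C \<in> sets borel \<Longrightarrow>
                   measure M {\<omega> \<in> space M. X \<omega> \<in> B \<and> A \<omega> = k \<and> R \<omega> \<in> C}
                   = (\<integral>\<omega>. indicator {\<omega>. X \<omega> \<in> B \<and> A \<omega> = k} \<omega>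
                          * measure (kap (X \<omega>) k) C \<partial>M)"
    and R_sq: "integrable M (\<lambda>\<omega>. (R \<omega>)\<^sup>2)"
    and weight_sq: "\<And>j. integrable M (\<lambda>\<omega>. (R \<omega> * (if A \<omega> = j then 1 else 0) / p j (X \<omega>))\<^sup>2)"
begin

sublocale prob_space M
  by (rule M_prob)

lemma p_le_1: "p k x \<le> 1"
  using member_le_sum[of k UNIV "\<lambda>j. p j x"] p_sum[of x] p_pos by (simp add: less_imp_le)

definition context_algebra :: "'w measure" where
  "context_algebra = vimage_algebra (space M) X borel"

lemma sets_context_algebra: "sets context_algebra = {X -` B \<inter> space M | B. B \<in> sets borel}"
  unfolding context_algebra_def by (rule sets_vimage_algebra2) simp

lemma space_context_algebra: "space context_algebra = space M"
  unfolding context_algebra_def by simp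

lemma X_measurable_context [measurable]: "X \<in> context_algebra \<rightarrow>\<^sub>M borel"
  unfolding context_algebra_def by (rule measurable_vimage_algebra1) simp

lemma subalgebra_context_algebra: "subalgebra M context_algebra"
  unfolding subalgebra_def sets_context_algebra
  by (auto simp: context_algebra_def intro: measurable_sets)

sublocale finite_measure_subalgebra M context_algebra
  by unfold_locales (rule subalgebra_context_algebra)

lemma measurable_from_context:
  "f \<in> borel_measurable context_algebra \<Longrightarrow> f \<in> borel_measurable M"
  by (rule measurable_from_subalg[OF subalgebra_context_algebra])

lemma kap_prob_space: "prob_space (kap x k)"
  using measurable_space[OF kap_meas[of k], of x] by (simp add: space_prob_algebra)

lemma sets_kap [measurable_cong]: "sets (kap x k) = sets borel"
  using measurable_space[OF kap_meas[of k], of x] by (simp add: space_prob_algebra)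

lemma borel_measurable_kap: "borel_measurable (kap x k) = borel_measurable borel"
  by (rule measurable_cong_sets[OF sets_kap refl])

lemma kap_subprob [measurable]: "(\<lambda>x. kap x k) \<in> borel \<rightarrow>\<^sub>M subprob_algebra borel"
  using kap_meas by (rule measurable_prob_algebraD)

lemma nn_integral_action_indicator:
  assumes [measurable]: "h \<in> borel_measurable context_algebra"
  shows "(\<integral>\<^sup>+\<omega>. h \<omega> * indicator {\<omega>. A \<omega> = k} \<omega> \<partial>M) = (\<integral>\<^sup>+\<omega>. h \<omega> * ennreal (p k (X \<omega>)) \<partial>M)"
proof -
  have "AE \<omega> in M. ennreal (p k (X \<omega>)) = nn_cond_exp M context_algebra (indicator {\<omega>. A \<omega> = k}) \<omega>"
  proof (rule nn_cond_exp_charact)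
    fix S assume "S \<in> sets context_algebra"
    then obtain B where B [measurable]: "B \<in> sets borel" and S: "S = X -` B \<inter> space M"
      unfolding sets_context_algebra by auto
    have "(\<integral>\<^sup>+\<omega>\<in>S. indicator {\<omega>. A \<omega> = k} \<omega> \<partial>M)
        = (\<integral>\<^sup>+\<omega>. indicator {\<omega> \<in> space M. X \<omega> \<in> B \<and> A \<omega> = k} \<omega> \<partial>M)"
      unfolding S by (intro nn_integral_cong) (auto simp: indicator_def)
    also have "\<dots> = emeasure M {\<omega> \<in> space M. X \<omega> \<in> B \<and> A \<omega> = k}"
      by (rule nn_integral_indicator) measurable
    also have "\<dots> = ennreal (\<integral>\<omega>. indicator B (X \<omega>) * p k (X \<omega>) \<partial>M)"
      by (simp add: emeasure_eq_measure A_cond)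
    also have "\<dots> = (\<integral>\<^sup>+\<omega>\<in>S. ennreal (p k (X \<omega>)) \<partial>M)"
      unfolding S using p_pos
      by (subst nn_integral_eq_integral[symmetric])
         (auto intro!: integrable_const_bound[where B=1] nn_integral_cong less_imp_le
               simp: indicator_def p_le_1 abs_of_pos)
    finally show "(\<integral>\<^sup>+\<omega>\<in>S. indicator {\<omega>. A \<omega> = k} \<omega> \<partial>M) = (\<integral>\<^sup>+\<omega>\<in>S. ennreal (p k (X \<omega>)) \<partial>M)" .
  qed measurable
  then have "(\<integral>\<^sup>+\<omega>. h \<omega> * ennreal (p k (X \<omega>)) \<partial>M)
      = (\<integral>\<^sup>+\<omega>. h \<omega> * nn_cond_exp M context_algebra (indicator {\<omega>. A \<omega> = k}) \<omega> \<partial>M)"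
    by (intro nn_integral_cong_AE) auto
  also have "\<dots> = (\<integral>\<^sup>+\<omega>. h \<omega> * indicator {\<omega>. A \<omega> = k} \<omega> \<partial>M)"
    by (rule nn_cond_exp_intg) measurable
  finally show ?thesis ..
qed

lemma emeasure_kap_eq_measure: "emeasure (kap x k) C = ennreal (measure (kap x k) C)"
proof -
  interpret K: prob_space "kap x k"
    by (rule kap_prob_space)
  show ?thesis
    by (rule K.emeasure_eq_measure)
qed

lemma emeasure_kap_measurable [measurable]:
  "C \<in> sets borel \<Longrightarrow> (\<lambda>x. emeasure (kap x k) C) \<in> borel_measurable borel"
  by (rule measurable_compose[OF kap_subprob measurable_emeasure_subprob_algebra])

lemma nn_integral_reward_rectangle:
  assumes [measurable]: "B \<in> sets borel" "C \<in> sets borel"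
  shows "(\<integral>\<^sup>+\<omega>. indicator B (X \<omega>) * indicator {\<omega>. A \<omega> = k} \<omega> * indicator C (R \<omega>) \<partial>M)
       = (\<integral>\<^sup>+\<omega>. indicator B (X \<omega>) * ennreal (p k (X \<omega>)) * emeasure (kap (X \<omega>) k) C \<partial>M)"
proof -
  have "(\<integral>\<^sup>+\<omega>. indicator B (X \<omega>) * indicator {\<omega>. A \<omega> = k} \<omega> * indicator C (R \<omega>) \<partial>M)
      = (\<integral>\<^sup>+\<omega>. indicator {\<omega> \<in> space M. X \<omega> \<in> B \<and> A \<omega> = k \<and> R \<omega> \<in> C} \<omega> \<partial>M)"
    by (intro nn_integral_cong) (auto simp: indicator_def)
  also have "\<dots> = ennreal (\<integral>\<omega>. indicator {\<omega>. X \<omega> \<in> B \<and> A \<omega> = k} \<omega> * measure (kap (X \<omega>) k) C \<partial>M)"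
    by (simp add: emeasure_eq_measure R_cond)
  also have "\<dots> = (\<integral>\<^sup>+\<omega>. indicator B (X \<omega>) * emeasure (kap (X \<omega>) k) C * indicator {\<omega>. A \<omega> = k} \<omega> \<partial>M)"
  proof -
    have [measurable]: "(\<lambda>\<omega>. measure (kap (X \<omega>) k) C) \<in> borel_measurable M"
      by (simp add: measure_def)
    show ?thesis
      by (subst nn_integral_eq_integral[symmetric])
        (auto intro!: integrable_const_bound[where B=1] nn_integral_cong
          simp: indicator_def emeasure_kap_eq_measure
            prob_space.prob_le_1[OF kap_prob_space])
  qed
  also have "\<dots> = (\<integral>\<^sup>+\<omega>. indicator B (X \<omega>) * emeasure (kap (X \<omega>) k) C * ennreal (p k (X \<omega>)) \<partial>M)"
    by (rule nn_integral_action_indicator) measurable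
  finally show ?thesis
    by (simp add: mult_ac)
qed

(* Both sides integrate g against a measure on the reals; by the rectangle identity the two
   measures agree on every Borel set. *)
lemma reward_law:
  assumes [measurable]: "B \<in> sets borel" "g \<in> borel_measurable borel"
  shows "(\<integral>\<^sup>+\<omega>. indicator B (X \<omega>) * indicator {\<omega>. A \<omega> = k} \<omega> * g (R \<omega>) \<partial>M)
       = (\<integral>\<^sup>+\<omega>. indicator B (X \<omega>) * ennreal (p k (X \<omega>)) * (\<integral>\<^sup>+r. g r \<partial>kap (X \<omega>) k) \<partial>M)"
proof -
  define f :: "'w \<Rightarrow> ennreal" where "f \<omega> = indicator B (X \<omega>) * indicator {\<omega>. A \<omega> = k} \<omega>" for \<omega>
  define h :: "'x \<Rightarrow> ennreal" where "h x = indicator B x * ennreal (p k x)" for x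
  have [measurable]: "f \<in> borel_measurable M" "h \<in> borel_measurable borel"
    unfolding f_def h_def by measurable
  define L where "L = density (distr M borel X) h"
  have kernel: "(\<lambda>x. kap x k) \<in> L \<rightarrow>\<^sub>M subprob_algebra borel"
    unfolding L_def by (simp add: kap_subprob)
  have space_L: "space L \<noteq> {}"
    unfolding L_def by simp
  have law: "distr (density M f) borel R = L \<bind> (\<lambda>x. kap x k)"
  proof (rule measure_eqI)
    show "sets (distr (density M f) borel R) = sets (L \<bind> (\<lambda>x. kap x k))"
      using kernel space_L by (simp add: sets_bind_measurable)
    fix C assume "C \<in> sets (distr (density M f) borel R)"
    then have [measurable]: "C \<in> sets borel" by simp
    have "emeasure (distr (density M f) borel R) C = (\<integral>\<^sup>+\<omega>. f \<omega> * indicator C (R \<omega>) \<partial>M)"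
      by (subst emeasure_distr) (auto simp: emeasure_density intro!: nn_integral_cong split: split_indicator)
    also have "\<dots> = (\<integral>\<^sup>+\<omega>. h (X \<omega>) * emeasure (kap (X \<omega>) k) C \<partial>M)"
      using nn_integral_reward_rectangle[of B C] by (simp add: f_def h_def)
    also have "\<dots> = (\<integral>\<^sup>+x. emeasure (kap x k) C \<partial>L)"
      by (simp add: L_def nn_integral_density nn_integral_distr)
    also have "\<dots> = emeasure (L \<bind> (\<lambda>x. kap x k)) C"
      by (rule emeasure_bind[OF space_L kernel, symmetric]) simp
    finally show "emeasure (distr (density M f) borel R) C = emeasure (L \<bind> (\<lambda>x. kap x k)) C" .
  qed
  have "(\<integral>\<^sup>+\<omega>. f \<omega> * g (R \<omega>) \<partial>M) = (\<integral>\<^sup>+r. g r \<partial>distr (density M f) borel R)"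
    by (simp add: nn_integral_distr nn_integral_density)
  also have "\<dots> = (\<integral>\<^sup>+x. \<integral>\<^sup>+r. g r \<partial>kap x k \<partial>L)"
    unfolding law by (rule nn_integral_bind[OF assms(2) kernel])
  also have "\<dots> = (\<integral>\<^sup>+\<omega>. h (X \<omega>) * (\<integral>\<^sup>+r. g r \<partial>kap (X \<omega>) k) \<partial>M)"
    by (simp add: L_def nn_integral_density nn_integral_distr)
  finally show ?thesis
    by (simp add: f_def h_def mult_ac)
qed

lemma nn_integral_kap_measurable [measurable]:
  assumes [measurable]: "g \<in> borel_measurable borel"
  shows "(\<lambda>x. \<integral>\<^sup>+r. g r \<partial>kap x k) \<in> borel_measurable borel"
  by (rule nn_integral_measurable_subprob_algebra2[OF _ kap_subprob]) measurable

lemma AE_square_integrable_kap: "AE \<omega> in M. integrable (kap (X \<omega>) k) (\<lambda>r. r\<^sup>2)"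
proof -
  have "(\<integral>\<^sup>+\<omega>. ennreal (p k (X \<omega>)) * (\<integral>\<^sup>+r. ennreal (r\<^sup>2) \<partial>kap (X \<omega>) k) \<partial>M)
      = (\<integral>\<^sup>+\<omega>. indicator {\<omega>. A \<omega> = k} \<omega> * ennreal ((R \<omega>)\<^sup>2) \<partial>M)"
    using reward_law[of UNIV "\<lambda>r. ennreal (r\<^sup>2)" k] by simp
  also have "\<dots> \<le> (\<integral>\<^sup>+\<omega>. ennreal ((R \<omega>)\<^sup>2) \<partial>M)"
    by (intro nn_integral_mono) (simp add: indicator_def)
  also have "\<dots> < \<infinity>"
    using R_sq by (simp add: nn_integral_eq_integral)
  finally have "AE \<omega> in M. ennreal (p k (X \<omega>)) * (\<integral>\<^sup>+r. ennreal (r\<^sup>2) \<partial>kap (X \<omega>) k) \<noteq> \<infinity>"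
    by (intro nn_integral_PInf_AE) auto
  then show ?thesis
    by eventually_elim
      (use p_pos in \<open>auto intro!: integrableI_nonneg simp: ennreal_mult_eq_top_iff less_top[symmetric]
        ennreal_eq_0_iff not_le[symmetric] top_unique\<close>)
qed

lemma nn_cond_exp_action_reward:
  assumes [measurable]: "g \<in> borel_measurable borel"
  shows "AE \<omega> in M. nn_cond_exp M context_algebra (\<lambda>\<omega>. indicator {\<omega>. A \<omega> = k} \<omega> * g (R \<omega>)) \<omega>
           = ennreal (p k (X \<omega>)) * (\<integral>\<^sup>+r. g r \<partial>kap (X \<omega>) k)"
proof (rule AE_symmetric, rule nn_cond_exp_charact)
  fix S assume "S \<in> sets context_algebra"
  then obtain B where [measurable]: "B \<in> sets borel" and S: "S = X -` B \<inter> space M"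
    unfolding sets_context_algebra by auto
  have "(\<integral>\<^sup>+\<omega>\<in>S. indicator {\<omega>. A \<omega> = k} \<omega> * g (R \<omega>) \<partial>M)
      = (\<integral>\<^sup>+\<omega>. indicator B (X \<omega>) * indicator {\<omega>. A \<omega> = k} \<omega> * g (R \<omega>) \<partial>M)"
    unfolding S by (intro nn_integral_cong) (auto simp: indicator_def)
  also have "\<dots> = (\<integral>\<^sup>+\<omega>. indicator B (X \<omega>) * ennreal (p k (X \<omega>)) * (\<integral>\<^sup>+r. g r \<partial>kap (X \<omega>) k) \<partial>M)"
    by (rule reward_law) measurable
  also have "\<dots> = (\<integral>\<^sup>+\<omega>\<in>S. ennreal (p k (X \<omega>)) * (\<integral>\<^sup>+r. g r \<partial>kap (X \<omega>) k) \<partial>M)"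
    unfolding S by (intro nn_integral_cong) (auto simp: indicator_def)
  finally show "(\<integral>\<^sup>+\<omega>\<in>S. indicator {\<omega>. A \<omega> = k} \<omega> * g (R \<omega>) \<partial>M)
      = (\<integral>\<^sup>+\<omega>\<in>S. ennreal (p k (X \<omega>)) * (\<integral>\<^sup>+r. g r \<partial>kap (X \<omega>) k) \<partial>M)" .
qed measurable

lemma nn_cond_exp_reward:
  assumes [measurable]: "w \<in> borel_measurable context_algebra" "\<phi> \<in> borel_measurable borel"
    and w_nonneg: "\<And>\<omega>. 0 \<le> w \<omega>"
  shows "AE \<omega> in M. nn_cond_exp M context_algebra
             (\<lambda>\<omega>. ennreal (w \<omega> * (if A \<omega> = k then 1 else 0) * \<phi> (R \<omega>))) \<omega>
           = ennreal (w \<omega> * p k (X \<omega>)) * (\<integral>\<^sup>+r. ennreal (\<phi> r) \<partial>kap (X \<omega>) k)"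
proof -
  let ?g = "\<lambda>\<omega>. indicator {\<omega>. A \<omega> = k} \<omega> * ennreal (\<phi> (R \<omega>))"
  have [measurable]: "w \<in> borel_measurable M"
    by (rule measurable_from_context) fact
  have prod: "AE \<omega> in M. ennreal (w \<omega>) * nn_cond_exp M context_algebra ?g \<omega>
      = nn_cond_exp M context_algebra (\<lambda>\<omega>. ennreal (w \<omega>) * ?g \<omega>) \<omega>"
    by (rule nn_cond_exp_prod) measurable
  have eq: "(\<lambda>\<omega>. ennreal (w \<omega> * (if A \<omega> = k then 1 else 0) * \<phi> (R \<omega>))) = (\<lambda>\<omega>. ennreal (w \<omega>) * ?g \<omega>)"
    using w_nonneg by (auto simp: fun_eq_iff indicator_def ennreal_mult')
  have "(\<lambda>r. ennreal (\<phi> r)) \<in> borel_measurable borel"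
    by measurable
  from nn_cond_exp_action_reward[OF this, of k] prod show ?thesis
    unfolding eq by eventually_elim (simp add: ennreal_mult w_nonneg less_imp_le[OF p_pos] mult.assoc)
qed

lemma real_cond_exp_reward:
  assumes [measurable]: "w \<in> borel_measurable context_algebra" "\<phi> \<in> borel_measurable borel"
    and w_nonneg: "\<And>\<omega>. 0 \<le> w \<omega>" and integrable: "AE \<omega> in M. integrable (kap (X \<omega>) k) \<phi>"
  shows "AE \<omega> in M. real_cond_exp M context_algebra (\<lambda>\<omega>. w \<omega> * (if A \<omega> = k then 1 else 0) * \<phi> (R \<omega>)) \<omega>
           = w \<omega> * p k (X \<omega>) * (\<integral>r. \<phi> r \<partial>kap (X \<omega>) k)"
proof -
  have "(\<lambda>r. - \<phi> r) \<in> borel_measurable borel"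
    by measurable
  from nn_cond_exp_reward[OF assms(1,2) w_nonneg, of k] nn_cond_exp_reward[OF assms(1) this w_nonneg, of k]
    integrable
  show ?thesis
  proof eventually_elim
    case (elim \<omega>)
    then show ?case
      by (simp add: real_cond_exp_def real_lebesgue_integral_def[OF elim(3)] enn2real_mult w_nonneg
          less_imp_le[OF p_pos] right_diff_distrib)
  qed
qed

lemma AE_integrable_kap:
  "AE \<omega> in M. integrable (kap (X \<omega>) k) (\<lambda>r. r) \<and> integrable (kap (X \<omega>) k) (\<lambda>r. r\<^sup>2)"
  using AE_square_integrable_kap[of k]
proof eventually_elim
  case (elim \<omega>)
  interpret K: prob_space "kap (X \<omega>) k"
    by (rule kap_prob_space)
  show ?case
    using elim K.square_integrable_imp_integrable[of "\<lambda>r. r"] by simp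
qed

definition weight :: "'d \<Rightarrow> 'w \<Rightarrow> real" where
  "weight k \<omega> = R \<omega> * (if A \<omega> = k then 1 else 0) / p k (X \<omega>)"

definition weight_mean :: "'w \<Rightarrow> real^'d" where
  "weight_mean \<omega> = (\<chi> k. \<integral>r. r \<partial>kap (X \<omega>) k)"

definition weight_second_moment :: "'w \<Rightarrow> real^'d" where
  "weight_second_moment \<omega> = (\<chi> k. (\<integral>r. r\<^sup>2 \<partial>kap (X \<omega>) k) / p k (X \<omega>))"

definition weight_cov :: "'w \<Rightarrow> real^'d^'d" where
  "weight_cov \<omega> = (\<chi> j k. real_cond_exp M context_algebra (\<lambda>\<eta>. weight j \<eta> * weight k \<eta>) \<omega>
      - real_cond_exp M context_algebra (weight j) \<omega> * real_cond_exp M context_algebra (weight k) \<omega>)"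

lemma weight_measurable [measurable]: "weight k \<in> borel_measurable M"
  unfolding weight_def by measurable

lemma weight_other_action: "a \<noteq> A \<omega> \<Longrightarrow> weight a \<omega> = 0"
  unfolding weight_def by simp

lemma sum_mult_weight: "(\<Sum>a\<in>UNIV. c a * weight a \<omega>) = c (A \<omega>) * weight (A \<omega>) \<omega>"
proof -
  have "(\<Sum>a\<in>UNIV. c a * weight a \<omega>) = (\<Sum>a\<in>UNIV. if a = A \<omega> then c a * weight a \<omega> else 0)"
    by (intro sum.cong) (auto simp: weight_other_action)
  then show ?thesis
    by simp
qed

lemma square_sum_mult_weight:
  "(\<Sum>a\<in>UNIV. c a * weight a \<omega>)\<^sup>2 = (\<Sum>a\<in>UNIV. (c a)\<^sup>2 * (weight a \<omega>)\<^sup>2)"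
  using sum_mult_weight[of c \<omega>] sum_mult_weight[of "\<lambda>a. (c a)\<^sup>2 * weight a \<omega>" \<omega>]
  by (simp add: power2_eq_square mult.assoc)

lemma real_cond_exp_weight:
  "AE \<omega> in M. real_cond_exp M context_algebra (weight k) \<omega> = weight_mean \<omega> $ k"
proof -
  have eq: "weight k = (\<lambda>\<omega>. 1 / p k (X \<omega>) * (if A \<omega> = k then 1 else 0) * R \<omega>)"
    by (auto simp: fun_eq_iff weight_def)
  have "AE \<omega> in M. real_cond_exp M context_algebra (weight k) \<omega>
      = 1 / p k (X \<omega>) * p k (X \<omega>) * (\<integral>r. r \<partial>kap (X \<omega>) k)"
    unfolding eq using p_pos
    by (intro real_cond_exp_reward) (auto simp: less_imp_le intro: AE_mp[OF AE_integrable_kap[of k]])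
  then show ?thesis
    by eventually_elim (simp add: weight_mean_def less_imp_neq[OF p_pos, symmetric])
qed

lemma real_cond_exp_weight_square:
  "AE \<omega> in M. real_cond_exp M context_algebra (\<lambda>\<eta>. weight k \<eta> * weight k \<eta>) \<omega>
      = weight_second_moment \<omega> $ k"
proof -
  have eq: "(\<lambda>\<eta>. weight k \<eta> * weight k \<eta>)
      = (\<lambda>\<omega>. 1 / (p k (X \<omega>))\<^sup>2 * (if A \<omega> = k then 1 else 0) * (R \<omega>)\<^sup>2)"
    by (auto simp: fun_eq_iff weight_def power2_eq_square)
  have "AE \<omega> in M. real_cond_exp M context_algebra (\<lambda>\<eta>. weight k \<eta> * weight k \<eta>) \<omega>
      = 1 / (p k (X \<omega>))\<^sup>2 * p k (X \<omega>) * (\<integral>r. r\<^sup>2 \<partial>kap (X \<omega>) k)"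
    unfolding eq
    by (intro real_cond_exp_reward) (auto intro: AE_mp[OF AE_integrable_kap[of k]])
  then show ?thesis
    by eventually_elim (simp add: weight_second_moment_def power2_eq_square less_imp_neq[OF p_pos, symmetric])
qed

lemma real_cond_exp_weight_mult:
  assumes "j \<noteq> k"
  shows "AE \<omega> in M. real_cond_exp M context_algebra (\<lambda>\<eta>. weight j \<eta> * weight k \<eta>) \<omega> = 0"
proof -
  have "(\<lambda>\<eta>. weight j \<eta> * weight k \<eta>) = (\<lambda>_. 0)"
    using assms by (auto simp: fun_eq_iff weight_def)
  then show ?thesis
    by (simp del: real_cond_exp_F_meas) (rule real_cond_exp_F_meas; simp)
qed

(* Only the weight of the logged action is nonzero, so the conditional second-moment matrix of
   the weights is diagonal. *)
lemma AE_weight_cov_eq: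
  "AE \<omega> in M. weight_cov \<omega> = diag_minus_outer (weight_second_moment \<omega>) (weight_mean \<omega>)"
proof -
  have "AE \<omega> in M. \<forall>j\<in>UNIV. \<forall>k\<in>UNIV. weight_cov \<omega> $ j $ k
      = diag_minus_outer (weight_second_moment \<omega>) (weight_mean \<omega>) $ j $ k"
  proof (rule AE_finite_allI[OF finite_class.finite_UNIV], rule AE_finite_allI[OF finite_class.finite_UNIV])
    fix j k :: 'd
    show "AE \<omega> in M. weight_cov \<omega> $ j $ k = diag_minus_outer (weight_second_moment \<omega>) (weight_mean \<omega>) $ j $ k"
      using real_cond_exp_weight[of j] real_cond_exp_weight[of k] real_cond_exp_weight_square[of j]
        real_cond_exp_weight_mult[of j k]
      by (cases "j = k") (auto simp: weight_cov_def diag_minus_outer_def elim: AE_mp)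
  qed
  then show ?thesis
    by (simp add: vec_eq_iff)
qed

lemma weight_mean_measurable [measurable]: "(\<lambda>\<omega>. weight_mean \<omega> $ k) \<in> borel_measurable context_algebra"
  unfolding weight_mean_def vec_lambda_beta by measurable

lemma weight_mean_measurable_M [measurable]: "(\<lambda>\<omega>. weight_mean \<omega> $ k) \<in> borel_measurable M"
  by (rule measurable_from_context) measurable

lemma weight_second_moment_measurable [measurable]:
  "(\<lambda>\<omega>. weight_second_moment \<omega> $ k) \<in> borel_measurable context_algebra"
  unfolding weight_second_moment_def vec_lambda_beta by measurable

lemma weight_second_moment_nonneg: "0 \<le> weight_second_moment \<omega> $ k"
  unfolding weight_second_moment_def using p_pos[of k "X \<omega>"] by simp

lemma AE_weight_mean_square_le:
  "AE \<omega> in M. \<forall>j. (weight_mean \<omega> $ j)\<^sup>2 \<le> p j (X \<omega>) * weight_second_moment \<omega> $ j"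
proof -
  have "AE \<omega> in M. \<forall>j\<in>UNIV. (weight_mean \<omega> $ j)\<^sup>2 \<le> p j (X \<omega>) * weight_second_moment \<omega> $ j"
  proof (rule AE_finite_allI[OF finite_class.finite_UNIV])
    fix j
    show "AE \<omega> in M. (weight_mean \<omega> $ j)\<^sup>2 \<le> p j (X \<omega>) * weight_second_moment \<omega> $ j"
      using AE_integrable_kap[of j]
    proof eventually_elim
      case (elim \<omega>)
      then show ?case
        using prob_space.square_expectation_le[OF kap_prob_space, of "\<lambda>r. r" "X \<omega>" j] p_pos[of j "X \<omega>"]
        by (simp add: weight_mean_def weight_second_moment_def borel_measurable_kap)
    qed
  qed
  then show ?thesis
    by simp
qed

lemma AE_nn_cond_exp_weight_square:
  "AE \<omega> in M. nn_cond_exp M context_algebra (\<lambda>\<eta>. ennreal ((weight k \<eta>)\<^sup>2)) \<omega>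
      = ennreal (weight_second_moment \<omega> $ k)"
proof -
  have eq: "(\<lambda>\<eta>. ennreal ((weight k \<eta>)\<^sup>2))
      = (\<lambda>\<omega>. ennreal (1 / (p k (X \<omega>))\<^sup>2 * (if A \<omega> = k then 1 else 0) * (R \<omega>)\<^sup>2))"
    by (auto simp: fun_eq_iff weight_def power2_eq_square)
  have "AE \<omega> in M. nn_cond_exp M context_algebra (\<lambda>\<eta>. ennreal ((weight k \<eta>)\<^sup>2)) \<omega>
      = ennreal (1 / (p k (X \<omega>))\<^sup>2 * p k (X \<omega>)) * (\<integral>\<^sup>+r. ennreal (r\<^sup>2) \<partial>kap (X \<omega>) k)"
    unfolding eq by (rule nn_cond_exp_reward) auto
  with AE_integrable_kap[of k] show ?thesis
  proof eventually_elim
    case (elim \<omega>)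
    have "(\<integral>\<^sup>+r. ennreal (r\<^sup>2) \<partial>kap (X \<omega>) k) = ennreal (\<integral>r. r\<^sup>2 \<partial>kap (X \<omega>) k)"
      using elim(1) by (intro nn_integral_eq_integral) auto
    then show ?case
      using elim(2) p_pos[of k "X \<omega>"]
      by (simp add: weight_second_moment_def ennreal_mult[symmetric] power2_eq_square)
  qed
qed

lemma nn_integral_square_weighted_sum:
  assumes [measurable]: "\<And>a. c a \<in> borel_measurable context_algebra"
  shows "(\<integral>\<^sup>+\<omega>. ennreal ((\<Sum>a\<in>UNIV. c a \<omega> * weight a \<omega>)\<^sup>2) \<partial>M)
       = (\<integral>\<^sup>+\<omega>. ennreal (\<Sum>a\<in>UNIV. (c a \<omega>)\<^sup>2 * weight_second_moment \<omega> $ a) \<partial>M)"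
proof -
  have [measurable]: "c a \<in> borel_measurable M" for a
    by (rule measurable_from_context) measurable
  have "(\<integral>\<^sup>+\<omega>. ennreal ((\<Sum>a\<in>UNIV. c a \<omega> * weight a \<omega>)\<^sup>2) \<partial>M)
      = (\<Sum>a\<in>UNIV. \<integral>\<^sup>+\<omega>. ennreal ((c a \<omega>)\<^sup>2) * ennreal ((weight a \<omega>)\<^sup>2) \<partial>M)"
    by (subst nn_integral_sum[symmetric])
      (auto simp: square_sum_mult_weight sum_ennreal[symmetric] ennreal_mult intro!: nn_integral_cong)
  also have "\<dots> = (\<Sum>a\<in>UNIV. \<integral>\<^sup>+\<omega>. ennreal ((c a \<omega>)\<^sup>2) * nn_cond_exp M context_algebra (\<lambda>\<eta>. ennreal ((weight a \<eta>)\<^sup>2)) \<omega> \<partial>M)"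
    by (intro sum.cong refl nn_cond_exp_intg[symmetric]) measurable
  also have "\<dots> = (\<Sum>a\<in>UNIV. \<integral>\<^sup>+\<omega>. ennreal ((c a \<omega>)\<^sup>2) * ennreal (weight_second_moment \<omega> $ a) \<partial>M)"
  proof (intro sum.cong refl nn_integral_cong_AE)
    fix a
    show "AE \<omega> in M. ennreal ((c a \<omega>)\<^sup>2) * nn_cond_exp M context_algebra (\<lambda>\<eta>. ennreal ((weight a \<eta>)\<^sup>2)) \<omega>
        = ennreal ((c a \<omega>)\<^sup>2) * ennreal (weight_second_moment \<omega> $ a)"
      using AE_nn_cond_exp_weight_square[of a] by eventually_elim simp
  qed
  also have "\<dots> = (\<integral>\<^sup>+\<omega>. ennreal (\<Sum>a\<in>UNIV. (c a \<omega>)\<^sup>2 * weight_second_moment \<omega> $ a) \<partial>M)"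
    by (subst nn_integral_sum[symmetric])
      (auto intro!: nn_integral_cong measurable_from_context
        simp: sum_ennreal[symmetric] ennreal_mult weight_second_moment_nonneg)
  finally show ?thesis .
qed

lemma integral_weighted_sum:
  assumes [measurable]: "\<And>a. c a \<in> borel_measurable context_algebra"
    and square_integrable: "integrable M (\<lambda>\<omega>. (\<Sum>a\<in>UNIV. c a \<omega> * weight a \<omega>)\<^sup>2)"
  shows "(\<integral>\<omega>. (\<Sum>a\<in>UNIV. c a \<omega> * weight a \<omega>) \<partial>M) = (\<integral>\<omega>. (\<Sum>a\<in>UNIV. c a \<omega> * weight_mean \<omega> $ a) \<partial>M)"
proof -
  have [measurable]: "c a \<in> borel_measurable M" for a
    by (rule measurable_from_context) measurable
  have sum_integrable: "integrable M (\<lambda>\<omega>. \<Sum>a\<in>UNIV. c a \<omega> * weight a \<omega>)"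
    by (rule square_integrable_imp_integrable[OF _ square_integrable]) measurable
  have bound: "norm (c a \<omega> * weight a \<omega>) \<le> norm (\<Sum>a\<in>UNIV. c a \<omega> * weight a \<omega>)" for a \<omega>
    by (cases "a = A \<omega>") (simp_all add: sum_mult_weight weight_other_action)
  have summand: "integrable M (\<lambda>\<omega>. c a \<omega> * weight a \<omega>)" for a
    using sum_integrable by (rule Bochner_Integration.integrable_bound) (measurable, use bound in \<open>auto intro: always_eventually\<close>)
  have "integrable M (\<lambda>\<omega>. c a \<omega> * weight_mean \<omega> $ a)
      \<and> (\<integral>\<omega>. c a \<omega> * weight a \<omega> \<partial>M) = (\<integral>\<omega>. c a \<omega> * weight_mean \<omega> $ a \<partial>M)" for a
  proof -
    note cond_exp = real_cond_exp_intg[OF summand[of a] assms(1)[of a] weight_measurable[of a]]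
    have ae: "AE \<omega> in M. c a \<omega> * real_cond_exp M context_algebra (weight a) \<omega> = c a \<omega> * weight_mean \<omega> $ a"
      using real_cond_exp_weight[of a] by eventually_elim simp
    have "integrable M (\<lambda>\<omega>. c a \<omega> * real_cond_exp M context_algebra (weight a) \<omega>)
        = integrable M (\<lambda>\<omega>. c a \<omega> * weight_mean \<omega> $ a)"
      by (rule integrable_cong_AE[OF _ _ ae]) measurable
    moreover have "(\<integral>\<omega>. c a \<omega> * real_cond_exp M context_algebra (weight a) \<omega> \<partial>M)
        = (\<integral>\<omega>. c a \<omega> * weight_mean \<omega> $ a \<partial>M)"
      by (rule integral_cong_AE[OF _ _ ae]) measurable
    ultimately show ?thesis
      using cond_exp by simp
  qed
  then show ?thesis
    using summand by simp
qed

lemma weighted_sum_moments_le: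
  assumes c [measurable]: "\<And>a. c a \<in> borel_measurable context_algebra"
    and d [measurable]: "\<And>a. d a \<in> borel_measurable context_algebra"
    and d_square_integrable: "integrable M (\<lambda>\<omega>. (\<Sum>a\<in>UNIV. d a \<omega> * weight a \<omega>)\<^sup>2)"
    and same_mean: "AE \<omega> in M. (\<Sum>a\<in>UNIV. c a \<omega> * weight_mean \<omega> $ a) = (\<Sum>a\<in>UNIV. d a \<omega> * weight_mean \<omega> $ a)"
    and second_moment_le: "AE \<omega> in M. (\<Sum>a\<in>UNIV. (c a \<omega>)\<^sup>2 * weight_second_moment \<omega> $ a)
                                       \<le> (\<Sum>a\<in>UNIV. (d a \<omega>)\<^sup>2 * weight_second_moment \<omega> $ a)"
  shows "integrable M (\<lambda>\<omega>. (\<Sum>a\<in>UNIV. c a \<omega> * weight a \<omega>)\<^sup>2)"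
    and "(\<integral>\<omega>. (\<Sum>a\<in>UNIV. c a \<omega> * weight a \<omega>) \<partial>M) = (\<integral>\<omega>. (\<Sum>a\<in>UNIV. d a \<omega> * weight a \<omega>) \<partial>M)"
    and "(\<integral>\<omega>. (\<Sum>a\<in>UNIV. c a \<omega> * weight a \<omega>)\<^sup>2 \<partial>M) \<le> (\<integral>\<omega>. (\<Sum>a\<in>UNIV. d a \<omega> * weight a \<omega>)\<^sup>2 \<partial>M)"
proof -
  have [measurable]: "c a \<in> borel_measurable M" "d a \<in> borel_measurable M" for a
    using c d by (simp_all add: measurable_from_context)
  have nn_le: "(\<integral>\<^sup>+\<omega>. ennreal ((\<Sum>a\<in>UNIV. c a \<omega> * weight a \<omega>)\<^sup>2) \<partial>M)
      \<le> (\<integral>\<^sup>+\<omega>. ennreal ((\<Sum>a\<in>UNIV. d a \<omega> * weight a \<omega>)\<^sup>2) \<partial>M)"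
    unfolding nn_integral_square_weighted_sum[OF c] nn_integral_square_weighted_sum[OF d]
    using second_moment_le by (intro nn_integral_mono_AE) (auto elim: eventually_mono intro: ennreal_leI)
  have d_finite: "(\<integral>\<^sup>+\<omega>. ennreal ((\<Sum>a\<in>UNIV. d a \<omega> * weight a \<omega>)\<^sup>2) \<partial>M)
      = ennreal (\<integral>\<omega>. (\<Sum>a\<in>UNIV. d a \<omega> * weight a \<omega>)\<^sup>2 \<partial>M)"
    by (rule nn_integral_eq_integral[OF d_square_integrable]) simp
  show c_square_integrable: "integrable M (\<lambda>\<omega>. (\<Sum>a\<in>UNIV. c a \<omega> * weight a \<omega>)\<^sup>2)"
    using nn_le unfolding d_finite by (intro integrableI_nonneg) (auto intro: le_less_trans)
  have c_finite: "(\<integral>\<^sup>+\<omega>. ennreal ((\<Sum>a\<in>UNIV. c a \<omega> * weight a \<omega>)\<^sup>2) \<partial>M)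
      = ennreal (\<integral>\<omega>. (\<Sum>a\<in>UNIV. c a \<omega> * weight a \<omega>)\<^sup>2 \<partial>M)"
    by (rule nn_integral_eq_integral[OF c_square_integrable]) simp
  show "(\<integral>\<omega>. (\<Sum>a\<in>UNIV. c a \<omega> * weight a \<omega>)\<^sup>2 \<partial>M) \<le> (\<integral>\<omega>. (\<Sum>a\<in>UNIV. d a \<omega> * weight a \<omega>)\<^sup>2 \<partial>M)"
    using nn_le unfolding c_finite d_finite by (simp add: ennreal_le_iff integral_nonneg_AE)
  have "(\<integral>\<omega>. (\<Sum>a\<in>UNIV. c a \<omega> * weight_mean \<omega> $ a) \<partial>M) = (\<integral>\<omega>. (\<Sum>a\<in>UNIV. d a \<omega> * weight_mean \<omega> $ a) \<partial>M)"
    by (rule integral_cong_AE[OF _ _ same_mean]) measurable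
  then show "(\<integral>\<omega>. (\<Sum>a\<in>UNIV. c a \<omega> * weight a \<omega>) \<partial>M) = (\<integral>\<omega>. (\<Sum>a\<in>UNIV. d a \<omega> * weight a \<omega>) \<partial>M)"
    by (simp add: integral_weighted_sum[OF c c_square_integrable] integral_weighted_sum[OF d d_square_integrable])
qed

definition kernel_term :: "real^'m^'d \<Rightarrow> ('x \<Rightarrow> 'd) \<Rightarrow> 'w \<Rightarrow> real" where
  "kernel_term D pol \<omega> =
     R \<omega> * (axis (A \<omega>) 1 \<bullet> (kernel_matrix (weight_cov \<omega>) D *v axis (pol (X \<omega>)) 1)) / p (A \<omega>) (X \<omega>)"

definition ips_term :: "('x \<Rightarrow> 'd) \<Rightarrow> 'w \<Rightarrow> real" where
  "ips_term pol \<omega> = R \<omega> * (if A \<omega> = pol (X \<omega>) then 1 else 0) / p (A \<omega>) (X \<omega>)"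

lemma kernel_term_eq_weighted_sum:
  "kernel_term D pol \<omega>
     = (\<Sum>a\<in>UNIV. (kernel_matrix (weight_cov \<omega>) D *v axis (pol (X \<omega>)) 1) $ a * weight a \<omega>)"
  unfolding sum_mult_weight by (simp add: kernel_term_def weight_def inner_axis')

lemma ips_term_eq_weighted_sum:
  "ips_term pol \<omega> = (\<Sum>a\<in>UNIV. (if pol (X \<omega>) = a then 1 else 0) * weight a \<omega>)"
  unfolding sum_mult_weight by (simp add: ips_term_def weight_def)

lemma policy_indicator_measurable [measurable]:
  assumes [measurable]: "pol \<in> borel \<rightarrow>\<^sub>M count_space UNIV"
  shows "(\<lambda>\<omega>. if pol (X \<omega>) = a then 1 else 0 :: real) \<in> borel_measurable context_algebra"
  by measurable

lemma kernel_coefficient_measurable [measurable]: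
  assumes [measurable]: "pol \<in> borel \<rightarrow>\<^sub>M count_space UNIV"
  shows "(\<lambda>\<omega>. (kernel_matrix (weight_cov \<omega>) D *v axis (pol (X \<omega>)) 1) $ a)
           \<in> borel_measurable context_algebra"
proof -
  have "matrix_measurable context_algebra (\<lambda>\<omega>. kernel_matrix (weight_cov \<omega>) D)"
    by (intro matrix_measurable_kernel_matrix) (simp add: matrix_measurable_def weight_cov_def)
  then have [measurable]: "(\<lambda>\<omega>. kernel_matrix (weight_cov \<omega>) D $ a $ b) \<in> borel_measurable context_algebra" for b
    by (rule matrix_measurableD)
  have "(kernel_matrix (weight_cov \<omega>) D *v axis (pol (X \<omega>)) 1) $ a
      = (\<Sum>b\<in>UNIV. (if pol (X \<omega>) = b then 1 else 0) * kernel_matrix (weight_cov \<omega>) D $ a $ b)" for \<omega>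
    by (simp add: matrix_vector_mult_basis column_def if_distrib[of "\<lambda>x. x * _"] cong: if_cong)
  then show ?thesis
    by simp
qed

lemma ips_term_square_integrable:
  assumes [measurable]: "pol \<in> borel \<rightarrow>\<^sub>M count_space UNIV"
  shows "integrable M (\<lambda>\<omega>. (ips_term pol \<omega>)\<^sup>2)"
proof (rule Bochner_Integration.integrable_bound)
  show "integrable M (\<lambda>\<omega>. \<Sum>a\<in>UNIV. (weight a \<omega>)\<^sup>2)"
    using weight_sq by (simp add: weight_def)
  have "(ips_term pol \<omega>)\<^sup>2 \<le> (\<Sum>a\<in>UNIV. (weight a \<omega>)\<^sup>2)" for \<omega>
    unfolding ips_term_eq_weighted_sum square_sum_mult_weight by (intro sum_mono) simp
  then show "AE \<omega> in M. norm ((ips_term pol \<omega>)\<^sup>2) \<le> norm (\<Sum>a\<in>UNIV. (weight a \<omega>)\<^sup>2)"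
    by (simp add: sum_nonneg)
qed (simp add: ips_term_eq_weighted_sum measurable_from_context)

lemma kernel_term_moments:
  fixes D :: "real^'m^'d" and b :: "'x \<Rightarrow> real^'m"
  assumes rank: "rank D = CARD('m)"
    and regression: "\<And>\<omega> k. \<omega> \<in> space M \<Longrightarrow> (\<integral>r. r \<partial>kap (X \<omega>) k) = (D *v b (X \<omega>)) $ k"
    and invertible: "AE \<omega> in M. invertible (weight_cov \<omega>)"
    and [measurable]: "pol \<in> borel \<rightarrow>\<^sub>M count_space UNIV"
  shows "integrable M (\<lambda>\<omega>. (kernel_term D pol \<omega>)\<^sup>2)"
    and "(\<integral>\<omega>. kernel_term D pol \<omega> \<partial>M) = (\<integral>\<omega>. ips_term pol \<omega> \<partial>M)"
    and "(\<integral>\<omega>. (kernel_term D pol \<omega>)\<^sup>2 \<partial>M) \<le> (\<integral>\<omega>. (ips_term pol \<omega>)\<^sup>2 \<partial>M)"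
proof -
  let ?c = "\<lambda>\<omega>. kernel_matrix (weight_cov \<omega>) D *v axis (pol (X \<omega>)) 1"
  let ?i = "\<lambda>a \<omega>. if pol (X \<omega>) = a then 1 else 0 :: real"
  have pointwise: "AE \<omega> in M. ?c \<omega> \<bullet> weight_mean \<omega> = weight_mean \<omega> $ pol (X \<omega>)
      \<and> (\<Sum>a\<in>UNIV. (?c \<omega> $ a)\<^sup>2 * weight_second_moment \<omega> $ a) \<le> weight_second_moment \<omega> $ pol (X \<omega>)"
    using AE_weight_cov_eq AE_weight_mean_square_le invertible AE_space
  proof eventually_elim
    case (elim \<omega>)
    have "weight_mean \<omega> = D *v b (X \<omega>)"
      using regression[OF elim(4)] by (simp add: vec_eq_iff weight_mean_def)
    from kernel_weights_unbiased_second_moment_le[OF p_pos[where x = "X \<omega>"] p_sum[of "X \<omega>"] _ _ this rank, where s = "weight_second_moment \<omega>" and q = "pol (X \<omega>)"] elim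
    show ?case
      by simp
  qed
  have same_mean: "AE \<omega> in M. (\<Sum>a\<in>UNIV. ?c \<omega> $ a * weight_mean \<omega> $ a)
                                   = (\<Sum>a\<in>UNIV. ?i a \<omega> * weight_mean \<omega> $ a)"
    using pointwise by (rule eventually_mono) (simp add: inner_vec_def if_distrib[of "\<lambda>x. x * _"] cong: if_cong)
  have second_moment_le: "AE \<omega> in M. (\<Sum>a\<in>UNIV. (?c \<omega> $ a)\<^sup>2 * weight_second_moment \<omega> $ a)
                                   \<le> (\<Sum>a\<in>UNIV. (?i a \<omega>)\<^sup>2 * weight_second_moment \<omega> $ a)"
    using pointwise by (rule eventually_mono) (simp add: if_distrib[of "\<lambda>x. x\<^sup>2 * _"] cong: if_cong)
  note moments = weighted_sum_moments_le[of "\<lambda>a \<omega>. ?c \<omega> $ a" ?i, OF _ _ _ same_mean second_moment_le]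
  show "integrable M (\<lambda>\<omega>. (kernel_term D pol \<omega>)\<^sup>2)"
    and "(\<integral>\<omega>. kernel_term D pol \<omega> \<partial>M) = (\<integral>\<omega>. ips_term pol \<omega> \<partial>M)"
    and "(\<integral>\<omega>. (kernel_term D pol \<omega>)\<^sup>2 \<partial>M) \<le> (\<integral>\<omega>. (ips_term pol \<omega>)\<^sup>2 \<partial>M)"
    using moments ips_term_square_integrable
    unfolding kernel_term_eq_weighted_sum ips_term_eq_weighted_sum by simp_all
qed

lemma terms_measurable_tuple:
  fixes D :: "real^'m^'d"
  assumes [measurable]: "pol \<in> borel \<rightarrow>\<^sub>M count_space UNIV"
  defines "G \<equiv> vimage_algebra (space M) (\<lambda>\<omega>. (X \<omega>, A \<omega>, R \<omega>)) (borel \<Otimes>\<^sub>M count_space UNIV \<Otimes>\<^sub>M borel)"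
  shows "kernel_term D pol \<in> borel_measurable G" and "ips_term pol \<in> borel_measurable G"
proof -
  have "(\<lambda>\<omega>. (X \<omega>, A \<omega>, R \<omega>)) \<in> G \<rightarrow>\<^sub>M borel \<Otimes>\<^sub>M count_space UNIV \<Otimes>\<^sub>M borel"
    unfolding G_def by (rule measurable_vimage_algebra1) (simp add: space_pair_measure)
  then have X_G [measurable]: "X \<in> G \<rightarrow>\<^sub>M borel" and [measurable]: "A \<in> G \<rightarrow>\<^sub>M count_space UNIV" "R \<in> G \<rightarrow>\<^sub>M borel"
    by (auto dest: measurable_compose[where g = fst] measurable_compose[where g = "\<lambda>z. fst (snd z)"]
        measurable_compose[where g = "\<lambda>z. snd (snd z)"] simp: comp_def)
  have "space G = space M"
    unfolding G_def by simp
  then have "subalgebra G context_algebra"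
    using measurable_sets[OF X_G] by (auto simp: subalgebra_def sets_context_algebra space_context_algebra)
  then have from_context: "c \<in> borel_measurable context_algebra \<Longrightarrow> c \<in> borel_measurable G" for c :: "'w \<Rightarrow> real"
    by (rule measurable_from_subalg)
  have [measurable]: "weight a \<in> borel_measurable G" for a
    unfolding weight_def by measurable
  have [measurable]: "(\<lambda>\<omega>. (kernel_matrix (weight_cov \<omega>) D *v axis (pol (X \<omega>)) 1) $ a) \<in> borel_measurable G" for a
    by (rule from_context) measurable
  show "kernel_term D pol \<in> borel_measurable G"
    unfolding kernel_term_eq_weighted_sum[abs_def] by measurable
  show "ips_term pol \<in> borel_measurable G"
    unfolding ips_term_eq_weighted_sum[abs_def] by measurable
qed

lemma variance_kernel_term_le:
  fixes D :: "real^'m^'d" and b :: "'x \<Rightarrow> real^'m"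
  assumes "rank D = CARD('m)"
    and "\<And>\<omega> k. \<omega> \<in> space M \<Longrightarrow> (\<integral>r. r \<partial>kap (X \<omega>) k) = (D *v b (X \<omega>)) $ k"
    and "AE \<omega> in M. invertible (weight_cov \<omega>)"
    and [measurable]: "pol \<in> borel \<rightarrow>\<^sub>M count_space UNIV"
  shows "variance (kernel_term D pol) \<le> variance (ips_term pol)"
proof -
  note moments = kernel_term_moments[OF assms]
  have [measurable]: "(\<lambda>\<omega>. (kernel_matrix (weight_cov \<omega>) D *v axis (pol (X \<omega>)) 1) $ a) \<in> borel_measurable M" for a
    by (rule measurable_from_context) measurable
  have [measurable]: "kernel_term D pol \<in> borel_measurable M"
    unfolding kernel_term_eq_weighted_sum[abs_def] by measurable
  have [measurable]: "ips_term pol \<in> borel_measurable M"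
    unfolding ips_term_eq_weighted_sum[abs_def] by measurable
  have "integrable M (kernel_term D pol)"
    by (rule square_integrable_imp_integrable[OF _ moments(1)]) measurable
  then have "variance (kernel_term D pol)
      = expectation (\<lambda>\<omega>. (kernel_term D pol \<omega>)\<^sup>2) - (expectation (kernel_term D pol))\<^sup>2"
    using moments(1) by (rule variance_eq)
  moreover have "integrable M (ips_term pol)"
    by (rule square_integrable_imp_integrable[OF _ ips_term_square_integrable[OF assms(4)]]) measurable
  then have "variance (ips_term pol)
      = expectation (\<lambda>\<omega>. (ips_term pol \<omega>)\<^sup>2) - (expectation (ips_term pol))\<^sup>2"
    using ips_term_square_integrable[OF assms(4)] by (rule variance_eq)
  ultimately show ?thesis
    using moments(2,3) by simp
qed

end

section \<open>Independent rounds\<close>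

(* The kernel terms involve conditional expectations given X_i, so they are known to be
   sigma(X_i, A_i, R_i)-measurable but are not given as explicit functions of the tuple. *)
lemma (in prob_space) indep_vars_vimage_algebra:
  assumes indep: "indep_vars N Z I"
    and measurable: "\<And>i. i \<in> I \<Longrightarrow> T i \<in> borel_measurable (vimage_algebra (space M) (Z i) (N i))"
  shows "indep_vars (\<lambda>_. borel) T I"
proof -
  have Z: "Z i \<in> M \<rightarrow>\<^sub>M N i" if "i \<in> I" for i
    using indep that unfolding indep_vars_def2 by simp
  then have sets: "sets (vimage_algebra (space M) (Z i) (N i)) = {Z i -` S \<inter> space M | S. S \<in> sets (N i)}"
    if "i \<in> I" for i
    using that by (intro sets_vimage_algebra2) (simp add: measurable_def)
  have "subalgebra M (vimage_algebra (space M) (Z i) (N i))" if "i \<in> I" for i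
    using measurable_sets[OF Z[OF that]] by (auto simp: subalgebra_def sets[OF that])
  then have T: "T i \<in> borel_measurable M" if "i \<in> I" for i
    using that measurable by (blast intro: measurable_from_subalg)
  have "indep_sets (\<lambda>i. {Z i -` S \<inter> space M | S. S \<in> sets (N i)}) I"
    using indep unfolding indep_vars_def2 by blast
  then have "indep_sets (\<lambda>i. {T i -` B \<inter> space M | B. B \<in> sets borel}) I"
  proof (rule indep_sets_mono_sets)
    fix i assume i: "i \<in> I"
    show "{T i -` B \<inter> space M | B. B \<in> sets borel} \<subseteq> {Z i -` S \<inter> space M | S. S \<in> sets (N i)}"
      using measurable_sets[OF measurable[OF i]] by (auto simp: sets[OF i, symmetric])
  qed
  then show ?thesis
    unfolding indep_vars_def2 using T by blast
qed

lemma (in prob_space) variance_sum_indep: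
  fixes T :: "'i \<Rightarrow> 'a \<Rightarrow> real"
  assumes "finite I" and indep: "indep_vars (\<lambda>_. borel) T I"
    and square_integrable: "\<And>i. i \<in> I \<Longrightarrow> integrable M (\<lambda>\<omega>. (T i \<omega>)\<^sup>2)"
  shows "variance (\<lambda>\<omega>. \<Sum>i\<in>I. T i \<omega>) = (\<Sum>i\<in>I. variance (T i))"
proof -
  define U where "U i \<omega> = T i \<omega> - expectation (T i)" for i \<omega>
  have [measurable]: "T i \<in> borel_measurable M" if "i \<in> I" for i
    using indep that unfolding indep_vars_def2 by blast
  have integrable: "integrable M (T i)" if "i \<in> I" for i
    using square_integrable_imp_integrable[OF _ square_integrable] that by simp
  have indep_U: "indep_vars (\<lambda>_. borel) U I"
    unfolding U_def by (rule indep_vars_compose2[OF indep]) measurable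
  have products: "integrable M (\<lambda>\<omega>. U i \<omega> * U k \<omega>)
      \<and> expectation (\<lambda>\<omega>. U i \<omega> * U k \<omega>) = (if i = k then variance (T i) else 0)"
    if "i \<in> I" "k \<in> I" for i k
  proof (cases "i = k")
    case True
    then show ?thesis
      using square_integrable[OF that(1)] integrable[OF that(1)]
      by (simp add: U_def power2_eq_square[symmetric] power2_diff)
  next
    case False
    have pair: "indep_vars (\<lambda>_. borel) U {i, k}"
      using indep_vars_subset[OF indep_U] that by simp
    have "integrable M (U j)" if "j \<in> {i, k}" for j
      using integrable \<open>i \<in> I\<close> \<open>k \<in> I\<close> that by (auto simp: U_def[abs_def])
    with pair indep_vars_lebesgue_integral[of "{i, k}" U] indep_vars_integrable[of "{i, k}" U] False
    show ?thesis
      using integrable \<open>i \<in> I\<close> by (simp add: U_def prob_space)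
  qed
  have "variance (\<lambda>\<omega>. \<Sum>i\<in>I. T i \<omega>) = expectation (\<lambda>\<omega>. (\<Sum>i\<in>I. U i \<omega>)\<^sup>2)"
    using integrable by (simp add: U_def integral_sum sum_subtractf)
  also have "\<dots> = expectation (\<lambda>\<omega>. \<Sum>i\<in>I. \<Sum>k\<in>I. U i \<omega> * U k \<omega>)"
    by (simp add: power2_eq_square sum_product)
  also have "\<dots> = (\<Sum>i\<in>I. \<Sum>k\<in>I. expectation (\<lambda>\<omega>. U i \<omega> * U k \<omega>))"
    using products by (simp add: integral_sum)
  also have "\<dots> = (\<Sum>i\<in>I. variance (T i))"
    using products \<open>finite I\<close> by (simp add: sum.delta)
  finally show ?thesis .
qed

lemma (in prob_space) variance_scale:
  fixes f :: "'a \<Rightarrow> real"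
  shows "variance (\<lambda>\<omega>. c * f \<omega>) = c\<^sup>2 * variance f"
proof -
  have "(\<lambda>\<omega>. (c * f \<omega> - c * expectation f)\<^sup>2) = (\<lambda>\<omega>. c\<^sup>2 * (f \<omega> - expectation f)\<^sup>2)"
    by (simp add: fun_eq_iff power_mult_distrib right_diff_distrib[symmetric])
  then show ?thesis
    by simp
qed

lemma design_mult_vector: "(design act fv *v \<beta>) $ k = fv (act k) \<bullet> \<beta>"
  by (simp add: design_def matrix_vector_mult_def inner_vec_def)

lemma cond_cov_matrix_eq_weight_cov:
  assumes "logged_round M (X i) (A i) (R i) (pit i) kap"
  shows "cond_cov_matrix M borel pit X A R i = logged_round.weight_cov M (X i) (A i) (R i) (pit i)"
proof -
  have weight: "logged_round.weight (X i) (A i) (R i) (pit i) = ips_weight pit X A R i"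
    by (simp add: fun_eq_iff ips_weight_def logged_round.weight_def[OF assms])
  show ?thesis
    by (simp add: fun_eq_iff cond_cov_matrix_def logged_round.weight_cov_def[OF assms]
        logged_round.context_algebra_def[OF assms] weight Let_def)
qed

lemma V_K_eq_sum_kernel_terms:
  assumes "\<And>i. i \<in> {1..n} \<Longrightarrow> logged_round M (X i) (A i) (R i) (pit i) kap"
  shows "V_K M borel n pit X A R D pol
           = (\<lambda>\<omega>. 1 / real n * (\<Sum>i\<in>{1..n}. logged_round.kernel_term M (X i) (A i) (R i) (pit i) D pol \<omega>))"
proof -
  have "R i \<omega> * (axis (A i \<omega>) 1 \<bullet> (kernel_matrix (cond_cov_matrix M borel pit X A R i \<omega>) D
          *v axis (pol (X i \<omega>)) 1)) / pit i (A i \<omega>) (X i \<omega>)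
        = logged_round.kernel_term M (X i) (A i) (R i) (pit i) D pol \<omega>" if "i \<in> {1..n}" for i \<omega>
    by (simp add: logged_round.kernel_term_def[OF assms[OF that]]
        cond_cov_matrix_eq_weight_cov[where X = X and A = A and R = R and pit = pit, OF assms[OF that]])
  then show ?thesis
    unfolding V_K_def by (auto intro!: sum.cong)
qed

lemma V_IPS_eq_sum_ips_terms:
  assumes "\<And>i. i \<in> {1..n} \<Longrightarrow> logged_round M (X i) (A i) (R i) (pit i) kap"
  shows "V_IPS n pit X A R pol
           = (\<lambda>\<omega>. 1 / real n * (\<Sum>i\<in>{1..n}. logged_round.ips_term (X i) (A i) (R i) (pit i) pol \<omega>))"
proof -
  have "R i \<omega> * (if A i \<omega> = pol (X i \<omega>) then 1 else 0) / pit i (A i \<omega>) (X i \<omega>)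
        = logged_round.ips_term (X i) (A i) (R i) (pit i) pol \<omega>" if "i \<in> {1..n}" for i \<omega>
    by (simp add: logged_round.ips_term_def[OF assms[OF that]])
  then show ?thesis
    unfolding V_IPS_def by (auto intro!: sum.cong)
qed

lemma (in prob_space) variance_kernel_estimator_le:
  fixes D :: "real^'m^'d" and b :: "'x::topological_space \<Rightarrow> real^'m"
  assumes round: "\<And>i. i \<in> {1..n} \<Longrightarrow> logged_round M (X i) (A i) (R i) (pit i) kap"
    and indep: "indep_vars (\<lambda>_. borel \<Otimes>\<^sub>M count_space UNIV \<Otimes>\<^sub>M borel) (\<lambda>i \<omega>. (X i \<omega>, A i \<omega>, R i \<omega>)) {1..n}"
    and rank: "rank D = CARD('m)"
    and regression: "\<And>i \<omega> k. i \<in> {1..n} \<Longrightarrow> \<omega> \<in> space M \<Longrightarrow> (\<integral>r. r \<partial>kap (X i \<omega>) k) = (D *v b (X i \<omega>)) $ k"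
    and invertible: "\<And>i. i \<in> {1..n} \<Longrightarrow> AE \<omega> in M. invertible (cond_cov_matrix M borel pit X A R i \<omega>)"
    and pol: "pol \<in> borel \<rightarrow>\<^sub>M count_space UNIV"
  shows "variance (V_K M borel n pit X A R D pol) \<le> variance (V_IPS n pit X A R pol)"
proof -
  let ?K = "\<lambda>i. logged_round.kernel_term M (X i) (A i) (R i) (pit i) D pol"
  let ?I = "\<lambda>i. logged_round.ips_term (X i) (A i) (R i) (pit i) pol"
  have round_le: "integrable M (\<lambda>\<omega>. (?K i \<omega>)\<^sup>2) \<and> integrable M (\<lambda>\<omega>. (?I i \<omega>)\<^sup>2)
      \<and> variance (?K i) \<le> variance (?I i)" if i: "i \<in> {1..n}" for i
  proof -
    interpret logged_round M "X i" "A i" "R i" "pit i" kap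
      by (rule round[OF i])
    have "AE \<omega> in M. invertible (weight_cov \<omega>)"
      using invertible[OF i]
      by (simp add: cond_cov_matrix_eq_weight_cov[where X = X and A = A and R = R and pit = pit, OF round[OF i]])
    then show ?thesis
      using kernel_term_moments(1) variance_kernel_term_le ips_term_square_integrable rank
        regression[OF i] pol
      by blast
  qed
  have indep_K: "indep_vars (\<lambda>_. borel) ?K {1..n}"
    by (rule indep_vars_vimage_algebra[OF indep]) (rule logged_round.terms_measurable_tuple(1)[OF round pol])
  have indep_I: "indep_vars (\<lambda>_. borel) ?I {1..n}"
    by (rule indep_vars_vimage_algebra[OF indep]) (rule logged_round.terms_measurable_tuple(2)[OF round pol])
  have V_K: "V_K M borel n pit X A R D pol = (\<lambda>\<omega>. 1 / real n * (\<Sum>i\<in>{1..n}. ?K i \<omega>))"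
    by (rule V_K_eq_sum_kernel_terms) (rule round)
  have V_IPS: "V_IPS n pit X A R pol = (\<lambda>\<omega>. 1 / real n * (\<Sum>i\<in>{1..n}. ?I i \<omega>))"
    by (rule V_IPS_eq_sum_ips_terms) (rule round)
  have "variance (V_K M borel n pit X A R D pol) = (1 / real n)\<^sup>2 * (\<Sum>i\<in>{1..n}. variance (?K i))"
    unfolding V_K variance_scale
    using round_le by (subst variance_sum_indep[OF _ indep_K]) auto
  also have "\<dots> \<le> (1 / real n)\<^sup>2 * (\<Sum>i\<in>{1..n}. variance (?I i))"
    using round_le by (intro mult_left_mono sum_mono) auto
  also have "\<dots> = variance (V_IPS n pit X A R pol)"
    unfolding V_IPS variance_scale
    using round_le by (subst variance_sum_indep[OF _ indep_I]) auto
  finally show ?thesis .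
qed

theorem corollary2:
  fixes M :: "'w measure"
    and n :: nat
    and Xset :: "(real^'p) set"
    and act :: "'d::finite \<Rightarrow> real"
    and X :: "nat \<Rightarrow> 'w \<Rightarrow> real^'p"
    and A :: "nat \<Rightarrow> 'w \<Rightarrow> 'd"
    and R :: "nat \<Rightarrow> 'w \<Rightarrow> real"
    and pit :: "nat \<Rightarrow> 'd \<Rightarrow> real^'p \<Rightarrow> real"
    and kap :: "real^'p \<Rightarrow> 'd \<Rightarrow> real measure"
    and fv :: "real \<Rightarrow> real^'m"
    and c0 :: 'm
    and beta :: "real^'p \<Rightarrow> real^'m"
    and pol :: "real^'p \<Rightarrow> 'd"
  assumes P: "prob_space M"
    and n_pos: "n \<ge> 1"
    and act_inj: "inj act"
    and meas_X: "\<And>i. i \<in> {1..n} \<Longrightarrow> X i \<in> M \<rightarrow>\<^sub>M borel"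
    and meas_A: "\<And>i. i \<in> {1..n} \<Longrightarrow> A i \<in> M \<rightarrow>\<^sub>M count_space UNIV"
    and meas_R: "\<And>i. i \<in> {1..n} \<Longrightarrow> R i \<in> M \<rightarrow>\<^sub>M borel"
    and X_in: "\<And>i \<omega>. i \<in> {1..n} \<Longrightarrow> \<omega> \<in> space M \<Longrightarrow> X i \<omega> \<in> Xset"
    \<comment> \<open>(i) the tuples are independent\<close>
    and indep: "prob_space.indep_vars M
                  (\<lambda>_. borel \<Otimes>\<^sub>M (count_space UNIV \<Otimes>\<^sub>M borel))
                  (\<lambda>i \<omega>. (X i \<omega>, A i \<omega>, R i \<omega>)) {1..n}"
    \<comment> \<open>(ii) X_1..X_n i.i.d. (independence follows from (i))\<close>
    and X_ident: "\<And>i. i \<in> {1..n} \<Longrightarrow> distr M borel (X i) = distr M borel (X 1)"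
    \<comment> \<open>(iii) conditional law of A_i given X_i is pit i (.|X_i), with positive probabilities\<close>
    and pit_meas: "\<And>i k. i \<in> {1..n} \<Longrightarrow> pit i k \<in> borel_measurable borel"
    and pit_pos: "\<And>i k x. i \<in> {1..n} \<Longrightarrow> pit i k x > 0"
    and pit_sum: "\<And>i x. i \<in> {1..n} \<Longrightarrow> (\<Sum>k\<in>UNIV. pit i k x) = 1"
    and A_cond: "\<And>i k B. i \<in> {1..n} \<Longrightarrow> B \<in> sets borel \<Longrightarrow>
                   measure M {\<omega> \<in> space M. X i \<omega> \<in> B \<and> A i \<omega> = k}
                   = (\<integral>\<omega>. indicator B (X i \<omega>) * pit i k (X i \<omega>) \<partial>M)"
    \<comment> \<open>(iv) conditional law of R_i given (X_i, A_i) is a common kernel kap\<close>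
    and kap_meas: "\<And>k. (\<lambda>x. kap x k) \<in> borel \<rightarrow>\<^sub>M prob_algebra borel"
    and R_cond: "\<And>i k B C. i \<in> {1..n} \<Longrightarrow> B \<in> sets borel \<Longrightarrow> C \<in> sets borel \<Longrightarrow>
                   measure M {\<omega> \<in> space M. X i \<omega> \<in> B \<and> A i \<omega> = k \<and> R i \<omega> \<in> C}
                   = (\<integral>\<omega>. indicator {\<omega>. X i \<omega> \<in> B \<and> A i \<omega> = k} \<omega>
                          * measure (kap (X i \<omega>) k) C \<partial>M)"
    \<comment> \<open>finite second moments of rewards\<close>
    and R_sq: "\<And>i. i \<in> {1..n} \<Longrightarrow> integrable M (\<lambda>\<omega>. (R i \<omega>)\<^sup>2)"
    \<comment> \<open>finite second moments of the IPS weights (so that Sigma_i is defined)\<close>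
    and Y_sq: "\<And>i j. i \<in> {1..n} \<Longrightarrow>
                 integrable M (\<lambda>\<omega>. (ips_weight pit X A R i j \<omega>)\<^sup>2)"
    \<comment> \<open>f(a) = (1, f_1(a), ..., f_q(a)): coordinate c0 is the intercept\<close>
    and intercept: "\<And>a. fv a $ c0 = 1"
    and full_rank: "rank (design act fv) = CARD('m)"
    \<comment> \<open>regression assumption, rho(x,a) = E[R | X = x, A = a] = mean of kap x a\<close>
    and regression: "\<And>x k. x \<in> Xset \<Longrightarrow> (\<integral>r. r \<partial>kap x k) = fv (act k) \<bullet> beta x"
    \<comment> \<open>Sigma_i(X_i) invertible\<close>
    and Sigma_inv: "\<And>i. i \<in> {1..n} \<Longrightarrow>
                 AE \<omega> in M. invertible (cond_cov_matrix M borel pit X A R i \<omega>)"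
    \<comment> \<open>deterministic (measurable) policy\<close>
    and pol_meas: "pol \<in> borel \<rightarrow>\<^sub>M count_space UNIV"
  shows "prob_space.variance M (V_K M borel n pit X A R (design act fv) pol)
         \<le> prob_space.variance M (V_IPS n pit X A R pol)"
proof -
  interpret prob_space M
    by (rule P)
  have round: "logged_round M (X i) (A i) (R i) (pit i) kap" if i: "i \<in> {1..n}" for i
    using P meas_X[OF i] meas_A[OF i] meas_R[OF i] pit_meas[OF i] pit_pos[OF i] pit_sum[OF i]
      A_cond[OF i] kap_meas R_cond[OF i] R_sq[OF i] Y_sq[OF i]
    by unfold_locales (simp_all add: ips_weight_def)
  have linear_mean: "(\<integral>r. r \<partial>kap (X i \<omega>) k) = (design act fv *v beta (X i \<omega>)) $ k"
    if "i \<in> {1..n}" "\<omega> \<in> space M" for i \<omega> k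
    using regression[OF X_in[OF that]] by (simp add: design_mult_vector)
  show ?thesis
    by (rule variance_kernel_estimator_le[OF round indep full_rank linear_mean Sigma_inv pol_meas])
qed

end
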